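(* Let $\mathbf v\in\mathbb R_{>0}^m$, $\tau=\sum_iv_i^2k_i$, and let $\mathcal V\in\mathcal P_{\mathbf v}(m,\mathbf k,d)$ be irreducible. Then the smooth map $\mathrm{RSO}:\mathcal P_{\mathbf v}\to\mathcal G\ell(d)^+_\tau$, $\mathrm{RSO}(\mathcal U)=S_{\mathcal U}$, has a smooth local cross section around $S_{\mathcal V}$ sending $S_{\mathcal V}$ to $\mathcal V$: there exist an open neighborhood $A$ of $S_{\mathcal V}$ in $\mathcal G\ell(d)^+_\tau$ and a smooth map $\rho:A\to\mathcal P_{\mathbf v}$ such that $S_{\rho(S)}=S$ for all $S\in A$ and $\rho(S_{\mathcal V})=\mathcal V$.
   Context: Fix integers $m,d\ge1$ and $\mathbf k=(k_1,\dots,k_m)\in\mathbb N^m$ with each $k_i\le d$. A system is an $m$-tuple $\mathcal V=(V_i)_{i=1}^m$ with $V_i\in L(\mathbb C^d,\mathbb C^{k_i})$; its RS operator is $S_{\mathcal V}=\sum_iV_i^*V_i$, and $\mathcal V$ is a reconstruction system (RS) if $S_{\mathcal V}$ is invertible. Given weights $\mathbf v=(v_i)\in\mathbb R_{>0}^m$, $\mathcal P_{\mathbf v}=\mathcal P_{\mathbf v}(m,\mathbf k,d)$ is the set of RS's with $V_iV_i^*=v_i^2I_{k_i}$ for all $i$ (projective RS's with weights $\mathbf v$); then $\operatorname{tr}S_{\mathcal V}=\tau:=\sum_iv_i^2k_i$. A system $\mathcal V\in\mathcal P_{\mathbf v}$ is irreducible if the commutant $\{A\in M_d(\mathbb C):AV_i^*V_i=V_i^*V_iA\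 \forall i\}$ equals $\mathbb C I_d$. Let $\mathcal I(k,d)=\{U\in L(\mathbb C^k,\mathbb C^d):U^*U=I_k\}$ and $\mathcal I(\mathbf k,d)=\prod_i\mathcal I(k_i,d)$ (product manifold). The map $\mathcal V\mapsto(v_i^{-1}V_i^* )_i$ is a bijection of $\mathcal P_{\mathbf v}$ onto the open subset $\mathcal I_0(\mathbf k,d)=\{(U_i)\in\mathcal I(\mathbf k,d):\sum_iU_iU_i^*\text{ invertible}\}$; $\mathcal P_{\mathbf v}$ carries the smooth structure making this bijection a diffeomorphism. $\mathcal G\ell(d)^+_\tau$ is the manifold of positive definite $d\times d$ matrices with trace $\tau$ (an open subset of the affine space of Hermitian matrices of trace $\tau$). *)

theory Defs
  imports "HOL-Analysis.Analysis"
begin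

text \<open>C^d is modelled by complex^'n with d = CARD('n). A system V = (V_i)_{i<m} with
  V_i in L(C^d, C^{k_i}) is a function V :: nat => nat => 'n => complex, where
  V i r c is the (r,c) entry of V_i (row r < k i, column c).  Entries outside the
  range (i >= m or r >= k i) are required to be 0 (canonical representation).\<close>

type_synonym 'n system = "nat \<Rightarrow> nat \<Rightarrow> 'n \<Rightarrow> complex"

definition wf_system :: "nat \<Rightarrow> (nat \<Rightarrow> nat) \<Rightarrow> ('n::finite) system \<Rightarrow> bool" where
  "wf_system m k V \<longleftrightarrow> (\<forall>i r c. (i \<ge> m \<or> r \<ge> k i) \<longrightarrow> V i r c = 0)"

definition frame_block :: "(nat \<Rightarrow> nat) \<Rightarrow> ('n::finite) system \<Rightarrow> nat \<Rightarrow> complex^'n^'n" where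
  "frame_block k V i = (\<chi> a b. \<Sum>r<k i. cnj (V i r a) * V i r b)"

definition RS_op :: "nat \<Rightarrow> (nat \<Rightarrow> nat) \<Rightarrow> ('n::finite) system \<Rightarrow> complex^'n^'n" where
  "RS_op m k V = (\<Sum>i<m. frame_block k V i)"

definition Pv :: "nat \<Rightarrow> (nat \<Rightarrow> nat) \<Rightarrow> (nat \<Rightarrow> real) \<Rightarrow> ('n::finite) system set" where
  "Pv m k v = {V. wf_system m k V \<and>
     (\<forall>i<m. \<forall>r<k i. \<forall>s<k i.
        (\<Sum>c\<in>UNIV. V i r c * cnj (V i s c)) = (if r = s then complex_of_real ((v i)\<^sup>2) else 0))
     \<and> invertible (RS_op m k V)}"

definition irreducible_sys :: "nat \<Rightarrow> (nat \<Rightarrow> nat) \<Rightarrow> ('n::finite) system \<Rightarrow> bool" where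
  "irreducible_sys m k V \<longleftrightarrow>
     {A :: complex^'n^'n. \<forall>i<m. A ** frame_block k V i = frame_block k V i ** A} = range mat"

definition hermitian_mat :: "(complex^('n::finite)^'n) \<Rightarrow> bool" where
  "hermitian_mat S \<longleftrightarrow> (\<forall>a b. S $ a $ b = cnj (S $ b $ a))"

definition posdef_mat :: "(complex^('n::finite)^'n) \<Rightarrow> bool" where
  "posdef_mat S \<longleftrightarrow> hermitian_mat S \<and>
     (\<forall>x :: complex^'n. x \<noteq> 0 \<longrightarrow> 0 < Re (\<Sum>a\<in>UNIV. \<Sum>b\<in>UNIV. cnj (x $ a) * S $ a $ b * x $ b))"

definition herm_trace :: "real \<Rightarrow> (complex^('n::finite)^'n) set" where
  "herm_trace \<tau> = {S. hermitian_mat S \<and> trace S = complex_of_real \<tau>}"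

definition Gl_pos :: "real \<Rightarrow> (complex^('n::finite)^'n) set" where
  "Gl_pos \<tau> = {S. posdef_mat S \<and> trace S = complex_of_real \<tau>}"

text \<open>C-infinity on an open set W of a real normed vector space: there is a family D of
  iterated directional derivatives, D [] = f on W and D vs has Frechet derivative
  h |-> D (h # vs) x at each x in W (derivatives of every order exist).\<close>
definition smooth_on :: "'a::real_normed_vector set \<Rightarrow> ('a \<Rightarrow> 'b::real_normed_vector) \<Rightarrow> bool" where
  "smooth_on W f \<longleftrightarrow> (\<exists>D :: 'a list \<Rightarrow> 'a \<Rightarrow> 'b.
     (\<forall>x\<in>W. D [] x = f x) \<and>
     (\<forall>vs. \<forall>x\<in>W. (D vs has_derivative (\<lambda>h. D (h # vs) x)) (at x)))"

end

theory Submission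
  imports Defs
begin

(* Write F_i = V_i^* V_i, so that S_V = \<Sum>_i F_i.  Replacing V_i by V_i P_i with unitary P_i keeps
   the system in P_v and changes its RS operator to \<Sum>_i P_i^* F_i P_i.  We parametrize unitaries by
   the Cayley transform cay Y = (1 - Y)^{-1} (1 + Y) of skew-Hermitian Y.  The linearization of
   (Y_i)_i \<mapsto> \<Sum>_i cay(Y_i)^* F_i cay(Y_i) at Y = 0 is \<Lambda>(Y) = \<Sum>_i 2 (F_i Y_i - Y_i F_i), and
   irreducibility says exactly that \<Lambda> maps onto the traceless Hermitian matrices: a matrix orthogonal
   to the range of \<Lambda> commutes with every F_i, hence is scalar, hence zero.  Composing a linear right
   inverse L of \<Lambda> with the Cayley transform and adding back the non-Hermitian and trace parts gives
   a smooth self-map f of all d \<times> d matrices with f 0 = S_V and derivative the identity at 0.  A smooth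
   inverse function theorem inverts f near S_V, and \<rho>(S) = V \<cdot> cay(L(f^{-1} S)) is the section. *)


section \<open>Smooth maps\<close>

lemma smooth_coinduct:
  fixes f :: "'a::real_normed_vector \<Rightarrow> 'b::real_normed_vector"
  assumes P: "P f"
    and step: "\<And>\<phi>. P \<phi> \<Longrightarrow> \<exists>\<phi>'. (\<forall>x\<in>W. (\<phi> has_derivative \<phi>' x) (at x)) \<and> (\<forall>h. P (\<lambda>x. \<phi>' x h))"
  shows "smooth_on W f"
proof -
  define der where "der \<phi> = (SOME \<phi>'. (\<forall>x\<in>W. (\<phi> has_derivative \<phi>' x) (at x)) \<and> (\<forall>h. P (\<lambda>x. \<phi>' x h)))"
    for \<phi> :: "'a \<Rightarrow> 'b"
  have der: "(\<forall>x\<in>W. (\<phi> has_derivative der \<phi> x) (at x)) \<and> (\<forall>h. P (\<lambda>x. der \<phi> x h))" if "P \<phi>" for \<phi>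
    unfolding der_def by (rule someI_ex[OF step[OF that]])
  define D :: "'a list \<Rightarrow> 'a \<Rightarrow> 'b" where "D = rec_list f (\<lambda>h vs Dvs. \<lambda>x. der Dvs x h)"
  have D0: "D [] = f" and DC: "D (h#vs) = (\<lambda>x. der (D vs) x h)" for h vs by (simp_all add: D_def)
  have PD: "P (D vs)" for vs
    by (induction vs) (use P der in \<open>auto simp: D0 DC\<close>)
  show ?thesis unfolding smooth_on_def
  proof (intro exI conjI ballI allI)
    show "D [] x = f x" for x by (simp add: D0)
    fix vs x assume "x\<in>W"
    then have "(D vs has_derivative der (D vs) x) (at x)" using der[OF PD] by blast
    then show "(D vs has_derivative (\<lambda>h. D (h # vs) x)) (at x)" by (simp add: DC)
  qed
qed

lemma smooth_onD:
  assumes "smooth_on W f" "open W"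
  obtains f' where "\<And>x. x\<in>W \<Longrightarrow> (f has_derivative f' x) (at x)" "\<And>h. smooth_on W (\<lambda>x. f' x h)"
proof -
  from assms obtain D where D0: "\<forall>x\<in>W. D [] x = f x"
    and DD: "\<forall>vs. \<forall>x\<in>W. (D vs has_derivative (\<lambda>h. D (h#vs) x)) (at x)"
    unfolding smooth_on_def by blast
  show ?thesis
  proof (rule that[of "\<lambda>x h. D [h] x"])
    fix x assume "x\<in>W"
    have "(D [] has_derivative (\<lambda>h. D [h] x)) (at x)" using DD \<open>x\<in>W\<close> by blast
    then show "(f has_derivative (\<lambda>h. D [h] x)) (at x)"
      by (rule has_derivative_transform_within_open[OF _ \<open>open W\<close> \<open>x\<in>W\<close>]) (use D0 in auto)
  next
    fix h
    show "smooth_on W (\<lambda>x. D [h] x)" unfolding smooth_on_def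
      by (rule exI[of _ "\<lambda>vs. D (vs @ [h])"]) (use DD in auto)
  qed
qed

lemma smooth_on_continuous_on:
  assumes "open W" "smooth_on W f"
  shows "continuous_on W f"
proof -
  obtain f' where "\<And>x. x\<in>W \<Longrightarrow> (f has_derivative f' x) (at x)"
    using smooth_onD[OF assms(2,1)] by blast
  then show ?thesis
    by (intro continuous_at_imp_continuous_on) (auto intro: has_derivative_continuous)
qed

lemma smooth_on_subset:
  assumes "smooth_on W f" "V \<subseteq> W"
  shows "smooth_on V f"
  using assms unfolding smooth_on_def by blast

lemma smooth_on_affine:
  assumes "bounded_linear l"
  shows "smooth_on W (\<lambda>x. l x + c)"
proof (rule smooth_coinduct[where P="\<lambda>\<phi>. \<exists>l c. bounded_linear l \<and> \<phi> = (\<lambda>x. l x + c)"])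
  show "\<exists>la ca. bounded_linear la \<and> (\<lambda>x. l x + c) = (\<lambda>x. la x + ca)" using assms by blast
next
  fix \<phi> :: "'a \<Rightarrow> 'b" assume "\<exists>l c. bounded_linear l \<and> \<phi> = (\<lambda>x. l x + c)"
  then obtain l c where l: "bounded_linear l" and \<phi>: "\<phi> = (\<lambda>x. l x + c)" by blast
  show "\<exists>\<phi>'. (\<forall>x\<in>W. (\<phi> has_derivative \<phi>' x) (at x)) \<and> (\<forall>h. \<exists>l c. bounded_linear l \<and> (\<lambda>x. \<phi>' x h) = (\<lambda>x. l x + c))"
  proof (rule exI[of _ "\<lambda>_. l"], intro conjI allI ballI)
    show "(\<phi> has_derivative (\<lambda>x. l x)) (at x)" for x
      unfolding \<phi> using l by (auto intro!: derivative_eq_intros simp: bounded_linear_imp_has_derivative)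
    show "\<exists>la ca. bounded_linear la \<and> (\<lambda>x. (\<lambda>_. l) x h) = (\<lambda>x. la x + ca)" for h
      by (rule exI[of _ "\<lambda>_. 0"], rule exI[of _ "l h"]) (simp add: bounded_linear_zero)
  qed
qed

lemma smooth_on_const: "smooth_on W (\<lambda>x. c)"
  using smooth_on_affine[OF bounded_linear_zero, of W c] by simp

lemma smooth_on_linear: "bounded_linear l \<Longrightarrow> smooth_on W l"
  using smooth_on_affine[of l W 0] by simp

lemma smooth_on_add:
  assumes "open W" "smooth_on W f" "smooth_on W g"
  shows "smooth_on W (\<lambda>x. f x + g x)"
proof (rule smooth_coinduct[where P="\<lambda>\<phi>. \<exists>f g. smooth_on W f \<and> smooth_on W g \<and> \<phi> = (\<lambda>x. f x + g x)"])
  show "\<exists>fa ga. smooth_on W fa \<and> smooth_on W ga \<and> (\<lambda>x. f x + g x) = (\<lambda>x. fa x + ga x)"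
    using assms by blast
next
  fix \<phi> :: "'a \<Rightarrow> 'b" assume "\<exists>f g. smooth_on W f \<and> smooth_on W g \<and> \<phi> = (\<lambda>x. f x + g x)"
  then obtain f g where f: "smooth_on W f" and g: "smooth_on W g" and \<phi>: "\<phi> = (\<lambda>x. f x + g x)" by blast
  obtain f' where f1: "\<And>x. x\<in>W \<Longrightarrow> (f has_derivative f' x) (at x)" and f2: "\<And>h. smooth_on W (\<lambda>x. f' x h)"
    using smooth_onD[OF f \<open>open W\<close>] by blast
  obtain g' where g1: "\<And>x. x\<in>W \<Longrightarrow> (g has_derivative g' x) (at x)" and g2: "\<And>h. smooth_on W (\<lambda>x. g' x h)"
    using smooth_onD[OF g \<open>open W\<close>] by blast
  show "\<exists>\<phi>'. (\<forall>x\<in>W. (\<phi> has_derivative \<phi>' x) (at x)) \<and> (\<forall>h. \<exists>f g. smooth_on W f \<and> smooth_on W g \<and> (\<lambda>x. \<phi>' x h) = (\<lambda>x. f x + g x))"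
  proof (rule exI[of _ "\<lambda>x h. f' x h + g' x h"], intro conjI ballI allI)
    show "(\<phi> has_derivative (\<lambda>h. f' x h + g' x h)) (at x)" if "x\<in>W" for x
      unfolding \<phi> using f1[OF that] g1[OF that] by (rule has_derivative_add)
    fix h show "\<exists>f g. smooth_on W f \<and> smooth_on W g \<and> (\<lambda>x. f' x h + g' x h) = (\<lambda>x. f x + g x)"
      using f2[of h] g2[of h] by blast
  qed
qed

lemma smooth_on_sum:
  assumes "open W" "finite S" "\<And>i. i\<in>S \<Longrightarrow> smooth_on W (f i)"
  shows "smooth_on W (\<lambda>x. \<Sum>i\<in>S. f i x)"
  using assms(2,3)
proof (induction S rule: finite_induct)
  case empty then show ?case by (simp add: smooth_on_const)
next
  case (insert a S) then show ?case by (simp add: smooth_on_add[OF \<open>open W\<close>])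
qed

lemma smooth_on_postlinear:
  assumes "bounded_linear l" "smooth_on W f"
  shows "smooth_on W (\<lambda>x. l (f x))"
proof -
  from assms(2) obtain D where D0: "\<forall>x\<in>W. D [] x = f x"
    and DD: "\<forall>vs. \<forall>x\<in>W. (D vs has_derivative (\<lambda>h. D (h#vs) x)) (at x)"
    unfolding smooth_on_def by blast
  show ?thesis unfolding smooth_on_def
  proof (rule exI[of _ "\<lambda>vs x. l (D vs x)"], intro conjI ballI allI)
    fix x vs assume "x\<in>W"
    show "l (D [] x) = l (f x)" using D0 \<open>x\<in>W\<close> by simp
    show "((\<lambda>x. l (D vs x)) has_derivative (\<lambda>h. l (D (h # vs) x))) (at x)"
      using bounded_linear.has_derivative[OF assms(1), of "D vs" "\<lambda>h. D (h # vs) x" "at x"] DD \<open>x\<in>W\<close> by blast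
  qed
qed

lemma smooth_on_prelinear:
  assumes "smooth_on U G" "bounded_linear l" "\<And>x. x\<in>W \<Longrightarrow> l x \<in> U"
  shows "smooth_on W (\<lambda>x. G (l x))"
proof -
  from assms(1) obtain D where D0: "\<forall>x\<in>U. D [] x = G x"
    and DD: "\<forall>vs. \<forall>x\<in>U. (D vs has_derivative (\<lambda>h. D (h#vs) x)) (at x)"
    unfolding smooth_on_def by blast
  show ?thesis unfolding smooth_on_def
  proof (rule exI[of _ "\<lambda>vs x. D (map l vs) (l x)"], intro conjI ballI allI)
    fix x assume x: "x\<in>W"
    show "D (map l []) (l x) = G (l x)" using D0 assms(3)[OF x] by simp
    fix vs
    have dD: "(D (map l vs) has_derivative (\<lambda>h. D (h # map l vs) (l x))) (at (l x))"
      using DD assms(3)[OF x] by blast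
    show "((\<lambda>x. D (map l vs) (l x)) has_derivative (\<lambda>h. D (map l (h # vs)) (l x))) (at x)"
      using has_derivative_compose[OF bounded_linear_imp_has_derivative[OF assms(2)] dD] by simp
  qed
qed

text \<open>Finite sums of bilinear products of smooth maps: the class that is closed under
  differentiation and thereby witnesses smoothness of bilinear combinations.\<close>

inductive bilinear_sum :: "'a::real_normed_vector set \<Rightarrow> ('b::real_normed_vector \<Rightarrow> 'c::real_normed_vector \<Rightarrow> 'd::real_normed_vector) \<Rightarrow> ('a \<Rightarrow> 'd) \<Rightarrow> bool"
  for W bl where
  product: "smooth_on W f \<Longrightarrow> smooth_on W g \<Longrightarrow> bilinear_sum W bl (\<lambda>x. bl (f x) (g x))"
| add: "bilinear_sum W bl \<phi> \<Longrightarrow> bilinear_sum W bl \<psi> \<Longrightarrow> bilinear_sum W bl (\<lambda>x. \<phi> x + \<psi> x)"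

lemma bilinear_sum_derivative:
  assumes bb: "bounded_bilinear bl" and W: "open W" and "bilinear_sum W bl \<phi>"
  shows "\<exists>\<phi>'. (\<forall>x\<in>W. (\<phi> has_derivative \<phi>' x) (at x)) \<and> (\<forall>h. bilinear_sum W bl (\<lambda>x. \<phi>' x h))"
  using assms(3)
proof (induction rule: bilinear_sum.induct)
  case (product f g)
  obtain f' where f1: "\<And>x. x\<in>W \<Longrightarrow> (f has_derivative f' x) (at x)" and f2: "\<And>h. smooth_on W (\<lambda>x. f' x h)"
    using smooth_onD[OF product(1) W] by blast
  obtain g' where g1: "\<And>x. x\<in>W \<Longrightarrow> (g has_derivative g' x) (at x)" and g2: "\<And>h. smooth_on W (\<lambda>x. g' x h)"
    using smooth_onD[OF product(2) W] by blast
  show ?case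
  proof (rule exI[of _ "\<lambda>x h. bl (f x) (g' x h) + bl (f' x h) (g x)"], intro conjI ballI allI)
    show "((\<lambda>x. bl (f x) (g x)) has_derivative (\<lambda>h. bl (f x) (g' x h) + bl (f' x h) (g x))) (at x)"
      if "x\<in>W" for x
      using bounded_bilinear.FDERIV[OF bb f1[OF that] g1[OF that]] .
    fix h show "bilinear_sum W bl (\<lambda>x. bl (f x) (g' x h) + bl (f' x h) (g x))"
      using product.hyps f2 g2 by (intro bilinear_sum.intros)
  qed
next
  case (add \<phi> \<psi>)
  obtain \<phi>' where p1: "\<forall>x\<in>W. (\<phi> has_derivative \<phi>' x) (at x)" and p2: "\<forall>h. bilinear_sum W bl (\<lambda>x. \<phi>' x h)"
    using add.IH(1) by blast
  obtain \<psi>' where q1: "\<forall>x\<in>W. (\<psi> has_derivative \<psi>' x) (at x)" and q2: "\<forall>h. bilinear_sum W bl (\<lambda>x. \<psi>' x h)"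
    using add.IH(2) by blast
  show ?case
  proof (rule exI[of _ "\<lambda>x h. \<phi>' x h + \<psi>' x h"], intro conjI ballI allI)
    show "((\<lambda>x. \<phi> x + \<psi> x) has_derivative (\<lambda>h. \<phi>' x h + \<psi>' x h)) (at x)" if "x\<in>W" for x
      using p1 q1 that by (auto intro: has_derivative_add)
    fix h show "bilinear_sum W bl (\<lambda>x. \<phi>' x h + \<psi>' x h)"
      using p2 q2 by (intro bilinear_sum.intros) auto
  qed
qed

lemma smooth_on_bilinear:
  assumes bb: "bounded_bilinear bl" and W: "open W" and "smooth_on W f" "smooth_on W g"
  shows "smooth_on W (\<lambda>x. bl (f x) (g x))"
proof (rule smooth_coinduct[where P="bilinear_sum W bl"])
  show "bilinear_sum W bl (\<lambda>x. bl (f x) (g x))" using assms(3,4) by (rule bilinear_sum.product)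
qed (rule bilinear_sum_derivative[OF bb W])

lemma smooth_on_scaleR:
  assumes "open W" "smooth_on W f" "smooth_on W g"
  shows "smooth_on W (\<lambda>x. f x *\<^sub>R g x)"
  using smooth_on_bilinear[OF bounded_bilinear_scaleR assms] .

lemma linear_pair_basis_expansion:
  fixes T :: "'a::real_vector \<times> 'b::euclidean_space \<Rightarrow> 'c::real_vector"
  assumes "linear T"
  shows "T (h, w) = T (h, 0) + (\<Sum>e\<in>Basis. (w \<bullet> e) *\<^sub>R T (0, e))"
proof -
  have "(\<Sum>e\<in>Basis. (w \<bullet> e) *\<^sub>R (0::'a, e)) = (0, w)"
    by (rule prod_eqI) (simp_all add: fst_sum snd_sum euclidean_representation)
  then have "(h, w) = (h, 0) + (\<Sum>e\<in>Basis. (w \<bullet> e) *\<^sub>R (0, e))" by simp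
  then show ?thesis
    by (simp only: linear_add[OF assms] linear_sum[OF assms] linear_scale[OF assms])
qed

text \<open>Smoothness along a solution of a smooth differential equation: if the derivative of g at y
  is a smooth expression \<Phi> h (y, g y), then y \<mapsto> G (y, g y) is smooth for every smooth G.  This
  is how smoothness of inverse maps (matrix inversion, local inverses) is bootstrapped from
  their first derivative.\<close>

lemma smooth_on_ode:
  fixes g :: "'a::real_normed_vector \<Rightarrow> 'b::euclidean_space"
    and G :: "'a \<times> 'b \<Rightarrow> 'c::real_normed_vector"
  assumes W: "open W" and U: "open U" and gU: "\<And>y. y\<in>W \<Longrightarrow> g y \<in> U"
    and gd: "\<And>y. y\<in>W \<Longrightarrow> (g has_derivative (\<lambda>h. \<Phi> h (y, g y))) (at y)"
    and \<Phi>s: "\<And>h. smooth_on (W \<times> U) (\<Phi> h)"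
    and G: "smooth_on (W \<times> U) G"
  shows "smooth_on W (\<lambda>y. G (y, g y))"
proof (rule smooth_coinduct[where P="\<lambda>\<phi>. \<exists>G. smooth_on (W \<times> U) G \<and> \<phi> = (\<lambda>y. G (y, g y))"])
  show "\<exists>Ga. smooth_on (W \<times> U) Ga \<and> (\<lambda>y. G (y, g y)) = (\<lambda>y. Ga (y, g y))" using G by blast
next
  have WU: "open (W \<times> U)" using W U by (rule open_Times)
  fix \<phi> :: "'a \<Rightarrow> 'c" assume "\<exists>G. smooth_on (W \<times> U) G \<and> \<phi> = (\<lambda>y. G (y, g y))"
  then obtain G where G: "smooth_on (W \<times> U) G" and \<phi>: "\<phi> = (\<lambda>y. G (y, g y))" by blast
  obtain G' where G1: "\<And>p. p\<in>W \<times> U \<Longrightarrow> (G has_derivative G' p) (at p)"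
    and G2: "\<And>k. smooth_on (W \<times> U) (\<lambda>p. G' p k)"
    using smooth_onD[OF G WU] by blast
  \<comment> \<open>the derivative of \<phi> in direction h, written as a smooth function of (y, g y)\<close>
  define Gh where "Gh h p = G' p (h, 0) + (\<Sum>e\<in>Basis. (\<Phi> h p \<bullet> e) *\<^sub>R G' p (0, e))" for h p
  have Ghs: "smooth_on (W \<times> U) (Gh h)" for h
  proof -
    have "smooth_on (W \<times> U) (\<lambda>p. (\<Phi> h p \<bullet> e) *\<^sub>R G' p (0, e))" for e
      by (rule smooth_on_scaleR[OF WU smooth_on_postlinear[OF bounded_linear_inner_left \<Phi>s] G2])
    then have "smooth_on (W \<times> U) (\<lambda>p. \<Sum>e\<in>Basis. (\<Phi> h p \<bullet> e) *\<^sub>R G' p (0, e))"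
      by (intro smooth_on_sum[OF WU finite_Basis])
    then show ?thesis unfolding Gh_def[abs_def] by (rule smooth_on_add[OF WU G2])
  qed
  show "\<exists>\<phi>'. (\<forall>x\<in>W. (\<phi> has_derivative \<phi>' x) (at x)) \<and> (\<forall>h. \<exists>G. smooth_on (W \<times> U) G \<and> (\<lambda>x. \<phi>' x h) = (\<lambda>y. G (y, g y)))"
  proof (rule exI[of _ "\<lambda>y h. Gh h (y, g y)"], intro conjI ballI allI)
    fix y assume y: "y \<in> W"
    have p: "(y, g y) \<in> W \<times> U" using y gU by auto
    have "((\<lambda>y. (y, g y)) has_derivative (\<lambda>h. (h, \<Phi> h (y, g y)))) (at y)"
      by (intro has_derivative_Pair has_derivative_ident gd y)
    from has_derivative_compose[OF this G1[OF p]]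
    have "(\<phi> has_derivative (\<lambda>h. G' (y, g y) (h, \<Phi> h (y, g y)))) (at y)" unfolding \<phi> .
    moreover have "G' (y, g y) (h, \<Phi> h (y, g y)) = Gh h (y, g y)" for h
      unfolding Gh_def by (rule linear_pair_basis_expansion[OF has_derivative_linear[OF G1[OF p]]])
    ultimately show "(\<phi> has_derivative (\<lambda>h. Gh h (y, g y))) (at y)" by simp
  next
    fix h show "\<exists>G. smooth_on (W \<times> U) G \<and> (\<lambda>y. Gh h (y, g y)) = (\<lambda>y. G (y, g y))"
      using Ghs by blast
  qed
qed

lemma smooth_on_compose:
  fixes a :: "'a::real_normed_vector \<Rightarrow> 'b::euclidean_space"
  assumes W: "open W" and U: "open U" and a: "smooth_on W a" and aU: "\<And>x. x\<in>W \<Longrightarrow> a x \<in> U"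
    and G: "smooth_on U G"
  shows "smooth_on W (\<lambda>x. G (a x))"
proof -
  obtain a' where a1: "\<And>x. x\<in>W \<Longrightarrow> (a has_derivative a' x) (at x)" and a2: "\<And>h. smooth_on W (\<lambda>x. a' x h)"
    using smooth_onD[OF a W] by blast
  have "smooth_on W (\<lambda>y. (\<lambda>p. G (snd p)) (y, a y))"
  proof (rule smooth_on_ode[OF W U aU, where \<Phi>="\<lambda>h p. a' (fst p) h"])
    show "(a has_derivative (\<lambda>h. a' (fst (y, a y)) h)) (at y)" if "y\<in>W" for y
      using a1[OF that] by simp
    show "smooth_on (W \<times> U) (\<lambda>p. a' (fst p) h)" for h
      by (rule smooth_on_prelinear[OF a2 bounded_linear_fst]) auto
    show "smooth_on (W \<times> U) (\<lambda>p. G (snd p))"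
      by (rule smooth_on_prelinear[OF G bounded_linear_snd]) auto
  qed
  then show ?thesis by simp
qed

section \<open>Matrix analysis\<close>

lemma norm_vec_le_sum: "norm (x::'a::real_normed_vector^'n) \<le> (\<Sum>i\<in>UNIV. norm (x$i))"
  unfolding norm_vec_def by (rule L2_set_le_sum) simp

lemma norm_entry_le: "norm (A$i$j) \<le> norm (A::'a::real_normed_vector^'n^'m)"
  using Finite_Cartesian_Product.norm_nth_le[of "A$i" j] Finite_Cartesian_Product.norm_nth_le[of A i]
  by linarith

lemma norm_matmul_le:
  fixes A B :: "'a::real_normed_field^'n^'n"
  shows "norm (A ** B) \<le> real (CARD('n))^3 * norm A * norm B"
proof -
  let ?d = "real (CARD('n))"
  have entry: "norm ((A ** B)$i$j) \<le> ?d * (norm A * norm B)" for i j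
  proof -
    have "norm ((A ** B)$i$j) = norm (\<Sum>k\<in>UNIV. A$i$k * B$k$j)"
      by (simp add: matrix_matrix_mult_def)
    also have "\<dots> \<le> (\<Sum>k\<in>UNIV. norm (A$i$k) * norm (B$k$j))"
      by (rule order_trans[OF norm_sum]) (simp add: norm_mult)
    also have "\<dots> \<le> (\<Sum>k\<in>(UNIV::'n set). norm A * norm B)"
      by (intro sum_mono mult_mono norm_entry_le) auto
    finally show ?thesis by simp
  qed
  have "norm (A ** B) \<le> (\<Sum>i\<in>UNIV. norm ((A ** B)$i))" by (rule norm_vec_le_sum)
  also have "\<dots> \<le> (\<Sum>i\<in>(UNIV::'n set). \<Sum>j\<in>(UNIV::'n set). norm ((A ** B)$i$j))"
    by (intro sum_mono norm_vec_le_sum)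
  also have "\<dots> \<le> (\<Sum>i\<in>(UNIV::'n set). \<Sum>j\<in>(UNIV::'n set). ?d * (norm A * norm B))"
    by (intro sum_mono entry)
  also have "\<dots> = ?d^3 * norm A * norm B" by (simp add: power3_eq_cube)
  finally show ?thesis .
qed

lemma bounded_bilinear_matmul:
  "bounded_bilinear (\<lambda>(A::'a::real_normed_field^'n^'n) (B::'a^'n^'n). A ** B)"
proof
  fix a a' b b' :: "'a^'n^'n" and r :: real
  show "(a + a') ** b = a ** b + a' ** b"
    by (vector matrix_matrix_mult_def sum.distrib[symmetric] field_simps)
  show "a ** (b + b') = a ** b + a ** b'" by (rule matrix_add_ldistrib)
  show "(r *\<^sub>R a) ** b = r *\<^sub>R (a ** b)" by (simp add: scalar_matrix_assoc)
  show "a ** (r *\<^sub>R b) = r *\<^sub>R (a ** b)" by (simp add: matrix_scalar_ac scalar_matrix_assoc)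
  show "\<exists>K. \<forall>(a::'a^'n^'n) (b::'a^'n^'n). norm (a ** b) \<le> norm a * norm b * K"
  proof (intro exI allI)
    fix a b :: "'a^'n^'n"
    show "norm (a ** b) \<le> norm a * norm b * real CARD('n)^3"
      using norm_matmul_le[of a b] by (simp add: mult_ac)
  qed
qed

interpretation mm: bounded_bilinear "\<lambda>(A::'a::real_normed_field^'n^'n) (B::'a^'n^'n). A ** B"
  by (rule bounded_bilinear_matmul)

lemma matmul_diff_left: "((A::'a::ring_1^'n^'n) - B) ** C = A ** C - B ** C"
  by (vector matrix_matrix_mult_def sum_subtractf left_diff_distrib)

lemma matmul_diff_right: "(A::'a::ring_1^'n^'n) ** (B - C) = A ** B - A ** C"
  by (vector matrix_matrix_mult_def sum_subtractf right_diff_distrib)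

lemma smooth_on_matmul:
  fixes f g :: "'x::real_normed_vector \<Rightarrow> 'a::real_normed_field^'n^'n"
  assumes "open W" "smooth_on W f" "smooth_on W g"
  shows "smooth_on W (\<lambda>x. f x ** g x)"
  using smooth_on_bilinear[OF bounded_bilinear_matmul assms] by simp

lemma matrix_inv_both:
  fixes A :: "'a::field^'n^'n"
  assumes "invertible A"
  shows "A ** matrix_inv A = mat 1" "matrix_inv A ** A = mat 1"
proof -
  have "\<exists>A'. A ** A' = mat 1 \<and> A' ** A = mat 1" using assms unfolding invertible_def by blast
  then have "A ** matrix_inv A = mat 1 \<and> matrix_inv A ** A = mat 1"
    unfolding matrix_inv_def by (rule someI_ex)
  then show "A ** matrix_inv A = mat 1" "matrix_inv A ** A = mat 1" by auto
qed

lemma matrix_inv_unique: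
  fixes A B :: "'a::field^'n^'n"
  assumes "A ** B = mat 1"
  shows "matrix_inv A = B"
proof -
  have inv: "invertible A" using assms invertible_right_inverse by blast
  have "matrix_inv A = matrix_inv A ** (A ** B)" using assms by simp
  also have "\<dots> = B" by (simp add: matrix_mul_assoc matrix_inv_both(2)[OF inv])
  finally show ?thesis .
qed

lemma matrix_inv_1[simp]: "matrix_inv (mat 1 :: 'a::field^'n^'n) = mat 1"
  by (rule matrix_inv_unique) simp

lemma matrix_inv_mult:
  fixes A B :: "'a::field^'n^'n"
  assumes "invertible A" "invertible B"
  shows "matrix_inv (A ** B) = matrix_inv B ** matrix_inv A"
proof (rule matrix_inv_unique)
  have "A ** B ** (matrix_inv B ** matrix_inv A) = A ** (B ** matrix_inv B) ** matrix_inv A"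
    by (simp add: matrix_mul_assoc)
  also have "\<dots> = mat 1" using matrix_inv_both[OF assms(1)] matrix_inv_both[OF assms(2)] by simp
  finally show "A ** B ** (matrix_inv B ** matrix_inv A) = mat 1" .
qed

text \<open>The invertible matrices form an open set, being the non-vanishing set of the determinant.\<close>

lemma open_invertible: "open {A::'a::real_normed_field^'n^'n. invertible A}"
proof -
  have entry: "continuous_on UNIV (\<lambda>A::'a^'n^'n. A$i$j)" for i j
    by (intro linear_continuous_on bounded_linear_compose[OF bounded_linear_vec_nth bounded_linear_vec_nth])
  have "continuous_on UNIV (det :: 'a^'n^'n \<Rightarrow> 'a)"
    unfolding det_def[abs_def]
    by (intro continuous_on_sum continuous_on_mult continuous_on_const continuous_on_prod entry)
  from open_Collect_neq[OF this continuous_on_const, of 0] show ?thesis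
    by (simp add: invertible_det_nz)
qed

lemma matrix_inv_perturb:
  fixes A H :: "'a::field^'n^'n"
  assumes "invertible A" "invertible (A + H)"
  shows "matrix_inv (A + H) - matrix_inv A = - (matrix_inv (A + H) ** H ** matrix_inv A)"
proof -
  let ?Q = "matrix_inv (A + H)" and ?B = "matrix_inv A"
  have "?Q ** H ** ?B = ?Q ** ((A + H) - A) ** ?B" by simp
  also have "\<dots> = ?Q ** (A + H) ** ?B - ?Q ** A ** ?B"
    by (simp only: matmul_diff_right matmul_diff_left)
  also have "\<dots> = ?B - ?Q"
    using matrix_inv_both[OF assms(1)] matrix_inv_both[OF assms(2)]
    by (simp add: matrix_mul_assoc[symmetric])
  finally show ?thesis by simp
qed

lemma norm_matrix_inv_perturb_le:
  fixes A H :: "'a::real_normed_field^'n^'n"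
  defines "C \<equiv> real CARD('n)^3"
  assumes A: "invertible A" and AH: "invertible (A + H)"
    and small: "C^2 * norm H * norm (matrix_inv A) \<le> 1/2"
  shows "norm (matrix_inv (A + H)) \<le> 2 * norm (matrix_inv A)"
proof -
  let ?Q = "matrix_inv (A + H)" and ?B = "matrix_inv A"
  have C1: "C \<ge> 1" unfolding C_def by simp
  have nm: "norm (X ** Y) \<le> C * norm X * norm Y" for X Y :: "'a^'n^'n"
    unfolding C_def by (rule norm_matmul_le)
  have "?Q = ?B - ?Q ** H ** ?B" using matrix_inv_perturb[OF A AH] by (simp add: algebra_simps)
  then have "norm ?Q \<le> norm ?B + norm (?Q ** H ** ?B)" by (metis norm_triangle_ineq4)
  also have "norm (?Q ** H ** ?B) \<le> C * norm (?Q ** H) * norm ?B" using nm by simp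
  also have "\<dots> \<le> C * (C * norm ?Q * norm H) * norm ?B"
    using nm[of ?Q H] C1 by (intro mult_right_mono mult_left_mono) auto
  finally have "norm ?Q \<le> norm ?B + (C^2 * norm H * norm ?B) * norm ?Q"
    by (simp add: power2_eq_square mult_ac)
  also have "\<dots> \<le> norm ?B + (1/2) * norm ?Q" using small by (intro add_left_mono mult_right_mono) auto
  finally show ?thesis by simp
qed

lemma matrix_inv_remainder_le:
  fixes A :: "'a::real_normed_field^'n^'n"
  assumes A: "invertible A"
  obtains \<delta> K where "\<delta> > 0"
    "\<And>H. norm H < \<delta> \<Longrightarrow>
       norm (matrix_inv (A + H) - matrix_inv A - - (matrix_inv A ** H ** matrix_inv A)) \<le> K * norm H * norm H"
proof -
  define C where "C = real CARD('n)^3"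
  define b where "b = norm (matrix_inv A)"
  have C1: "C \<ge> 1" and b0: "b \<ge> 0" by (simp_all add: C_def b_def)
  have nm: "norm (X ** Y) \<le> C * norm X * norm Y" for X Y :: "'a^'n^'n"
    unfolding C_def by (rule norm_matmul_le)
  obtain e where e: "e > 0" and eb: "\<And>X. dist X A < e \<Longrightarrow> invertible X"
    using open_invertible[where 'a='a and 'n='n] A unfolding open_dist by blast
  define \<delta> where "\<delta> = min e (1 / (2 * C^2 * (b + 1)))"
  show ?thesis
  proof (rule that[of \<delta> "2 * C^4 * b^3"])
    show "\<delta> > 0" using e C1 b0 by (simp add: \<delta>_def)
    fix H :: "'a^'n^'n" assume H: "norm H < \<delta>"
    let ?Q = "matrix_inv (A + H)" and ?B = "matrix_inv A" and ?h = "norm H"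
    have AH: "invertible (A + H)" using H by (intro eb) (simp add: dist_norm \<delta>_def)
    have pos: "2 * C^2 * (b + 1) > 0" using C1 b0 by simp
    have "?h < 1 / (2 * C^2 * (b + 1))" using H by (simp add: \<delta>_def)
    then have "?h * (2 * C^2 * (b + 1)) \<le> 1" using pos by (simp add: less_divide_eq)
    moreover have "C^2 * ?h * b \<le> C^2 * ?h * (b + 1)" by (intro mult_left_mono) auto
    moreover have "C^2 * ?h * (b + 1) = ?h * (2 * C^2 * (b + 1)) / 2" by simp
    ultimately have "C^2 * ?h * b \<le> 1/2" by linarith
    then have Qb: "norm ?Q \<le> 2 * b"
      using norm_matrix_inv_perturb_le[OF A AH] by (simp add: C_def b_def)
    have QB: "?B - ?Q = ?Q ** H ** ?B" using matrix_inv_perturb[OF A AH] by (metis minus_diff_eq minus_minus)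
    have "?Q - ?B - - (?B ** H ** ?B) = ?B ** H ** ?B - ?Q ** H ** ?B"
      using matrix_inv_perturb[OF A AH] by (simp add: algebra_simps)
    also have "\<dots> = (?B - ?Q) ** H ** ?B" by (simp add: matmul_diff_left)
    also have "\<dots> = ?Q ** H ** ?B ** H ** ?B" by (simp only: QB)
    finally have eq: "?Q - ?B - - (?B ** H ** ?B) = ?Q ** H ** ?B ** H ** ?B" .
    have "norm (?Q ** H ** ?B ** H ** ?B) \<le> C * norm (?Q ** H ** ?B ** H) * b" using nm by (simp add: b_def)
    also have "\<dots> \<le> C * (C * norm (?Q ** H ** ?B) * ?h) * b"
      using nm[of "?Q ** H ** ?B" H] C1 b0 by (intro mult_right_mono mult_left_mono) auto
    also have "\<dots> \<le> C * (C * (C * norm (?Q ** H) * b) * ?h) * b"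
      using nm[of "?Q ** H" ?B] C1 b0 by (intro mult_right_mono mult_left_mono) (auto simp: b_def)
    also have "\<dots> \<le> C * (C * (C * (C * norm ?Q * ?h) * b) * ?h) * b"
      using nm[of ?Q H] C1 b0 by (intro mult_right_mono mult_left_mono) auto
    also have "\<dots> = C^4 * norm ?Q * b^2 * ?h^2" by (simp add: power2_eq_square power4_eq_xxxx ac_simps)
    also have "\<dots> \<le> C^4 * (2 * b) * b^2 * ?h^2"
      using Qb C1 by (intro mult_right_mono mult_left_mono) auto
    also have "\<dots> = 2 * C^4 * b^3 * ?h * ?h" by (simp add: power2_eq_square power3_eq_cube ac_simps)
    finally show "norm (?Q - ?B - - (?B ** H ** ?B)) \<le> 2 * C^4 * b^3 * ?h * ?h" using eq by simp
  qed
qed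

lemma has_derivative_matrix_inv:
  fixes A :: "'a::real_normed_field^'n^'n"
  assumes A: "invertible A"
  shows "(matrix_inv has_derivative (\<lambda>H. - (matrix_inv A ** H ** matrix_inv A))) (at A)"
  unfolding has_derivative_at
proof
  show "bounded_linear (\<lambda>H. - (matrix_inv A ** H ** matrix_inv A))"
    by (intro bounded_linear_minus bounded_linear_compose[OF mm.bounded_linear_left mm.bounded_linear_right])
  obtain \<delta> K where \<delta>: "\<delta> > 0" and rem: "\<And>H. norm H < \<delta> \<Longrightarrow>
      norm (matrix_inv (A + H) - matrix_inv A - - (matrix_inv A ** H ** matrix_inv A)) \<le> K * norm H * norm H"
    using matrix_inv_remainder_le[OF A] by blast
  have ev: "eventually (\<lambda>H. norm H < \<delta> \<and> H \<noteq> 0) (at (0::'a^'n^'n))"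
    unfolding eventually_at by (rule exI[of _ \<delta>]) (auto simp: \<delta> dist_norm)
  show "(\<lambda>H. norm (matrix_inv (A + H) - matrix_inv A - - (matrix_inv A ** H ** matrix_inv A)) / norm H) \<midarrow>0\<rightarrow> 0"
  proof (rule tendsto_sandwich[of "\<lambda>_. 0" _ _ "\<lambda>H. K * norm H"])
    show "\<forall>\<^sub>F H in at 0. norm (matrix_inv (A + H) - matrix_inv A - - (matrix_inv A ** H ** matrix_inv A)) / norm H \<le> K * norm H"
      using ev by eventually_elim (use rem in \<open>auto simp: divide_le_eq mult_ac\<close>)
    show "((\<lambda>H. K * norm H) \<longlongrightarrow> 0) (at (0::'a^'n^'n))"
      by (auto intro!: tendsto_eq_intros)
  qed auto
qed

text \<open>Matrix inversion is smooth: its derivative is a smooth (bilinear) expression in the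
  inverse itself.\<close>

lemma smooth_on_matrix_inv:
  "smooth_on {A::'a::{real_normed_field,euclidean_space}^'n^'n. invertible A} matrix_inv"
proof -
  let ?W = "{A::'a^'n^'n. invertible A}"
  have WU: "open (?W \<times> (UNIV::('a^'n^'n) set))" using open_invertible by (intro open_Times) auto
  have "smooth_on ?W (\<lambda>A. snd (A, matrix_inv A))"
  proof (rule smooth_on_ode[OF open_invertible open_UNIV, where \<Phi>="\<lambda>H p. - (snd p ** H ** snd p)"])
    show "(matrix_inv has_derivative (\<lambda>H. - (snd (y, matrix_inv y) ** H ** snd (y, matrix_inv y)))) (at y)"
      if "y \<in> ?W" for y
      using has_derivative_matrix_inv[of y] that by simp
    show "smooth_on (?W \<times> UNIV) (\<lambda>p. - (snd p ** H ** snd p))" for H :: "'a^'n^'n"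
    proof -
      have "smooth_on (?W \<times> UNIV) (\<lambda>p::('a^'n^'n) \<times> ('a^'n^'n). - snd p ** H)"
        by (rule smooth_on_linear)
           (rule bounded_linear_compose[OF mm.bounded_linear_left bounded_linear_minus[OF bounded_linear_snd]])
      from smooth_on_matmul[OF WU this smooth_on_linear[OF bounded_linear_snd]]
      show ?thesis by (simp add: mm.minus_left)
    qed
    show "smooth_on (?W \<times> UNIV) snd" by (intro smooth_on_linear bounded_linear_snd)
  qed auto
  then show ?thesis by simp
qed

lemma bounded_linear_axis: "bounded_linear (\<lambda>v::'a::real_normed_vector. axis i v :: 'a^'k)"
proof (rule bounded_linear_intro[where K=1])
  show "axis i (x + y) = axis i x + axis i y" for x y :: 'a
    by (simp add: vec_eq_iff axis_def)
  show "axis i (r *\<^sub>R x) = r *\<^sub>R axis i x" for r and x :: 'a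
    by (simp add: vec_eq_iff axis_def)
  show "norm (axis i x :: 'a^'k) \<le> norm x * 1" for x :: 'a
  proof -
    have "norm (axis i x :: 'a^'k) \<le> (\<Sum>j\<in>UNIV. norm ((axis i x :: 'a^'k)$j))" by (rule norm_vec_le_sum)
    also have "\<dots> = norm x" by (simp add: axis_def if_distrib cong: if_cong)
    finally show ?thesis by simp
  qed
qed

lemma smooth_on_vec_lambda:
  fixes F :: "'k::finite \<Rightarrow> 'x::real_normed_vector \<Rightarrow> 'a::real_normed_vector"
  assumes "open W" "\<And>i. smooth_on W (F i)"
  shows "smooth_on W (\<lambda>x. \<chi> i. F i x)"
proof -
  have "smooth_on W (\<lambda>x. \<Sum>i\<in>UNIV. axis i (F i x) :: 'a^'k)"
    by (intro smooth_on_sum[OF assms(1)] finite smooth_on_postlinear[OF bounded_linear_axis] assms(2))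
  moreover have "(\<chi> i. F i x) = (\<Sum>i\<in>UNIV. axis i (F i x) :: 'a^'k)" for x
    by (simp add: vec_eq_iff axis_def if_distrib cong: if_cong)
  ultimately show ?thesis by simp
qed

lemma smooth_on_vec_nth:
  assumes "smooth_on W f"
  shows "smooth_on W (\<lambda>x. f x $ i)"
  by (rule smooth_on_postlinear[OF bounded_linear_vec_nth assms])

lemma bounded_linear_matvec: "bounded_linear (\<lambda>A::real^'k^'m. A *v h)"
proof -
  have "linear (\<lambda>A::real^'k^'m. A *v h)"
    by (rule linearI) (simp_all add: matrix_vector_mult_add_rdistrib scaleR_matrix_vector_assoc)
  then show ?thesis using linear_conv_bounded_linear by blast
qed

lemma inverse_function_theorem_jacobian:
  fixes f :: "real^'k \<Rightarrow> real^'k"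
  assumes U: "open U" and f1: "\<And>z. z\<in>U \<Longrightarrow> (f has_derivative f' z) (at z)"
    and f2: "\<And>h. continuous_on U (\<lambda>z. f' z h)" and x0: "x0 \<in> U" and id: "f' x0 = (\<lambda>h. h)"
  obtains U' V g where "open U'" "U' \<subseteq> U" "x0 \<in> U'" "open V" "f x0 \<in> V"
     "\<And>x. x \<in> U' \<Longrightarrow> g (f x) = x" "\<And>x. x \<in> U' \<Longrightarrow> f x \<in> V"
     "\<And>y. y \<in> V \<Longrightarrow> f (g y) = y" "\<And>y. y \<in> V \<Longrightarrow> g y \<in> U'"
     "\<And>z. z \<in> U' \<Longrightarrow> invertible (matrix (f' z))"
     "\<And>y. y \<in> V \<Longrightarrow> (g has_derivative (\<lambda>h. matrix_inv (matrix (f' (g y))) *v h)) (at y)"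
proof -
  have bl: "bounded_linear (f' z)" if "z\<in>U" for z using has_derivative_bounded_linear[OF f1[OF that]] .
  define F where "F z = Blinfun (f' z)" for z
  have Fa: "blinfun_apply (F z) = f' z" if "z \<in> U" for z
    using bounded_linear_Blinfun_apply[OF bl[OF that]] by (simp add: F_def)
  have derF: "(f has_derivative blinfun_apply (F z)) (at z)" if "z\<in>U" for z
    using f1[OF that] Fa[OF that] by simp
  have contF: "continuous_on U F"
  proof (rule continuous_on_blinfun_componentwise)
    fix h
    show "continuous_on U (\<lambda>z. blinfun_apply (F z) h)"
      by (rule continuous_on_eq[OF f2]) (simp add: Fa)
  qed
  have "F x0 = id_blinfun" by (intro blinfun_eqI) (simp add: Fa[OF x0] id)
  then have "id_blinfun o\<^sub>L F x0 = id_blinfun" by (simp add: blinfun_eqI)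
  then obtain U' V g g' where U': "open U'" "U' \<subseteq> U" "x0 \<in> U'" and V: "open V" "f x0 \<in> V"
    and hom: "homeomorphism U' V f g"
    and gd: "\<And>y. y \<in> V \<Longrightarrow> (g has_derivative g' y) (at y)"
    and g'e: "\<And>y. y \<in> V \<Longrightarrow> g' y = inv (blinfun_apply (F (g y)))"
    and bij: "\<And>y. y \<in> V \<Longrightarrow> bij (blinfun_apply (F (g y)))"
    using inverse_function_theorem[OF U derF contF x0] by blast
  have gf: "\<And>x. x \<in> U' \<Longrightarrow> g (f x) = x" and fU': "\<And>x. x \<in> U' \<Longrightarrow> f x \<in> V"
    and fg: "\<And>y. y \<in> V \<Longrightarrow> f (g y) = y" and gV: "\<And>y. y \<in> V \<Longrightarrow> g y \<in> U'"
    using hom unfolding homeomorphism_def by blast+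
  have Jv: "matrix (f' z) *v h = f' z h" if "z \<in> U" for z h
    using matrix_vector_mul(3)[OF bl[OF that]] by (simp add: fun_eq_iff)
  have Jinv: "invertible (matrix (f' z))" if "z \<in> U'" for z
  proof -
    obtain y where y: "y \<in> V" "z = g y" using hom \<open>z \<in> U'\<close> unfolding homeomorphism_def by blast
    have zU: "z \<in> U" using that U' by blast
    have "(*v) (matrix (f' z)) = f' z" using Jv[OF zU] by auto
    then show ?thesis using bij[OF y(1)] Fa[OF zU] y(2) by (simp add: invertible_eq_bij)
  qed
  have g'v: "g' y h = matrix_inv (matrix (f' (g y))) *v h" if "y \<in> V" for y h
  proof -
    have z: "g y \<in> U'" "g y \<in> U" using gV[OF that] U' by auto
    have inj: "inj (f' (g y))" using bij[OF that] Fa[OF z(2)] by (simp add: bij_is_inj)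
    have "f' (g y) (matrix_inv (matrix (f' (g y))) *v h) = h"
      using Jv[OF z(2), symmetric] matrix_inv_both(1)[OF Jinv[OF z(1)]]
      by (simp add: matrix_vector_mul_assoc)
    then have "inv (f' (g y)) h = matrix_inv (matrix (f' (g y))) *v h" by (rule inv_f_eq[OF inj])
    then show ?thesis using g'e[OF that] Fa[OF z(2)] by simp
  qed
  have "(g has_derivative (\<lambda>h. matrix_inv (matrix (f' (g y))) *v h)) (at y)" if "y \<in> V" for y
  proof -
    have "g' y = (\<lambda>h. matrix_inv (matrix (f' (g y))) *v h)" by (rule ext) (rule g'v[OF that])
    with gd[OF that] show ?thesis by simp
  qed
  from that[OF U' V gf fU' fg gV Jinv this] show ?thesis .
qed

text \<open>The inverse's derivative is the inverted
  Jacobian, a smooth expression in g, so smooth_on_ode applies.\<close>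

theorem smooth_local_inverse:
  fixes f :: "real^'k \<Rightarrow> real^'k"
  assumes U: "open U" and fs: "smooth_on U f" and x0: "x0 \<in> U"
    and d0: "(f has_derivative (\<lambda>h. h)) (at x0)"
  obtains U' V g where "open U'" "U' \<subseteq> U" "x0 \<in> U'" "open V" "f x0 \<in> V"
     "\<And>x. x \<in> U' \<Longrightarrow> g (f x) = x" "\<And>x. x \<in> U' \<Longrightarrow> f x \<in> V"
     "\<And>y. y \<in> V \<Longrightarrow> f (g y) = y" "\<And>y. y \<in> V \<Longrightarrow> g y \<in> U'" "smooth_on V g"
proof -
  obtain f' where f1: "\<And>z. z\<in>U \<Longrightarrow> (f has_derivative f' z) (at z)"
    and f2: "\<And>h. smooth_on U (\<lambda>z. f' z h)"
    using smooth_onD[OF fs U] by blast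
  have "f' x0 = (\<lambda>h. h)" by (rule has_derivative_unique[OF f1[OF x0] d0])
  then obtain U' V g where U': "open U'" "U' \<subseteq> U" "x0 \<in> U'" and V: "open V" "f x0 \<in> V"
    and gf: "\<And>x. x \<in> U' \<Longrightarrow> g (f x) = x" and fU': "\<And>x. x \<in> U' \<Longrightarrow> f x \<in> V"
    and fg: "\<And>y. y \<in> V \<Longrightarrow> f (g y) = y" and gV: "\<And>y. y \<in> V \<Longrightarrow> g y \<in> U'"
    and Jinv: "\<And>z. z \<in> U' \<Longrightarrow> invertible (matrix (f' z))"
    and gd: "\<And>y. y \<in> V \<Longrightarrow> (g has_derivative (\<lambda>h. matrix_inv (matrix (f' (g y))) *v h)) (at y)"
    using inverse_function_theorem_jacobian[OF U f1 smooth_on_continuous_on[OF U f2] x0] by blast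
  have Js: "smooth_on U (\<lambda>z. matrix (f' z))"
    unfolding matrix_def by (intro smooth_on_vec_lambda[OF U] smooth_on_vec_nth f2)
  have Jinv_s: "smooth_on U' (\<lambda>z. matrix_inv (matrix (f' z)))"
    by (rule smooth_on_compose[OF U'(1) open_invertible smooth_on_subset[OF Js U'(2)] _ smooth_on_matrix_inv])
       (simp add: Jinv)
  have "smooth_on V (\<lambda>y. snd (y, g y))"
  proof (rule smooth_on_ode[OF V(1) U'(1) gV, where \<Phi>="\<lambda>h p. matrix_inv (matrix (f' (snd p))) *v h"])
    show "(g has_derivative (\<lambda>h. matrix_inv (matrix (f' (snd (y, g y)))) *v h)) (at y)" if "y \<in> V" for y
      using gd[OF that] by simp
    show "smooth_on (V \<times> U') (\<lambda>p. matrix_inv (matrix (f' (snd p))) *v h)" for h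
      by (rule smooth_on_postlinear[OF bounded_linear_matvec])
         (rule smooth_on_prelinear[OF Jinv_s bounded_linear_snd], auto)
    show "smooth_on (V \<times> U') snd" by (rule smooth_on_linear[OF bounded_linear_snd])
  qed
  then have "smooth_on V g" by simp
  with that U' V gf fU' fg gV show ?thesis by blast
qed

section \<open>Adjoints, skew-Hermitian matrices and the Cayley transform\<close>

definition adj :: "complex^'n^'n \<Rightarrow> complex^'n^'n" where
  "adj A = (\<chi> i j. cnj (A$j$i))"

lemma adj_nth[simp]: "adj A $ i $ j = cnj (A $ j $ i)"
  by (simp add: adj_def)

lemma adj_adj[simp]: "adj (adj A) = A"
  by (simp add: vec_eq_iff)

lemma adj_add: "adj (A + B) = adj A + adj B"
  by (simp add: vec_eq_iff)

lemma adj_diff: "adj (A - B) = adj A - adj B"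
  by (simp add: vec_eq_iff)

lemma adj_minus: "adj (- A) = - adj A"
  by (simp add: vec_eq_iff)

lemma adj_zero[simp]: "adj 0 = 0"
  by (simp add: vec_eq_iff)

lemma adj_scaleR: "adj (r *\<^sub>R A) = r *\<^sub>R adj A"
  by (simp add: vec_eq_iff)

lemma adj_mat[simp]: "adj (mat c) = mat (cnj c)"
  by (simp add: vec_eq_iff mat_def)

lemma adj_mult: "adj (A ** B) = adj B ** adj A"
  by (simp add: vec_eq_iff matrix_matrix_mult_def mult.commute)

lemma adj_sum: "adj (\<Sum>i\<in>S. f i) = (\<Sum>i\<in>S. adj (f i))"
  by (induction S rule: infinite_finite_induct) (simp_all add: adj_add)

lemma bounded_linear_adj: "bounded_linear adj"
proof -
  have "linear adj" by (rule linearI) (simp_all add: adj_add adj_scaleR)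
  then show ?thesis using linear_conv_bounded_linear by blast
qed

lemma hermitian_adj: "hermitian_mat S \<longleftrightarrow> adj S = S"
  unfolding hermitian_mat_def vec_eq_iff adj_nth by metis

lemma trace_adj: "trace (adj A) = cnj (trace A)"
  by (simp add: trace_def)

lemma trace_sum: "trace (\<Sum>i\<in>S. f i) = (\<Sum>i\<in>S. trace (f i :: 'a::comm_semiring_1^'n^'n))"
  by (induction S rule: infinite_finite_induct) (simp_all add: trace_add trace_0[simplified])

lemma trace_scaleR: "trace (r *\<^sub>R (A::complex^'n^'n)) = r *\<^sub>R trace A"
  by (simp add: trace_def scaleR_sum_right)

lemma trace_mat: "trace (mat c :: 'a::comm_semiring_1^'n^'n) = of_nat CARD('n) * c"
  by (simp add: trace_def mat_def)

lemma trace_unitary_conj: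
  assumes "P ** adj P = mat 1"
  shows "trace (adj P ** F ** P) = trace F"
proof -
  have "trace (adj P ** F ** P) = trace (P ** (adj P ** F))" by (rule trace_mul_sym)
  also have "\<dots> = trace F" by (simp add: matrix_mul_assoc assms)
  finally show ?thesis .
qed

lemma inner_mat: "A \<bullet> B = Re (trace (adj A ** B))"
proof -
  have "A \<bullet> B = (\<Sum>i\<in>UNIV. \<Sum>j\<in>UNIV. Re (cnj (A$i$j) * B$i$j))"
    by (simp add: inner_vec_def inner_complex_def)
  also have "\<dots> = (\<Sum>j\<in>UNIV. \<Sum>i\<in>UNIV. Re (cnj (A$i$j) * B$i$j))"
    by (rule sum.swap)
  also have "\<dots> = Re (trace (adj A ** B))"
    by (simp add: trace_def matrix_matrix_mult_def Re_sum)
  finally show ?thesis .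
qed

definition skew :: "complex^'n^'n \<Rightarrow> bool" where "skew Y \<longleftrightarrow> adj Y = - Y"

lemma skew_add: "skew A \<Longrightarrow> skew B \<Longrightarrow> skew (A + B)"
  by (simp add: skew_def adj_add)

lemma skew_scaleR: "skew A \<Longrightarrow> skew (r *\<^sub>R A)"
  by (simp add: skew_def adj_scaleR)

lemma skew_zero: "skew 0"
  by (simp add: skew_def vec_eq_iff)

lemma skew_sum: "(\<And>i. i \<in> S \<Longrightarrow> skew (f i)) \<Longrightarrow> skew (\<Sum>i\<in>S. f i)"
  by (induction S rule: infinite_finite_induct) (simp_all add: skew_zero skew_add)

lemma skew_minus: "skew A \<Longrightarrow> skew (- A)"
  by (simp add: skew_def adj_minus)

lemma skew_commutator:
  assumes "adj F = F" "adj Q = Q"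
  shows "skew (F ** Q - Q ** F)"
  using assms by (simp add: skew_def adj_diff adj_mult)

text \<open>A skew-Hermitian matrix has purely imaginary spectrum; in particular it has no fixed
  vector other than 0.\<close>

lemma skew_fixed_vector:
  fixes Y :: "complex^'n^'n"
  assumes "skew Y" "Y *v x = x"
  shows "x = 0"
proof -
  define s where "s = (\<Sum>a\<in>UNIV. cnj (x$a) * (Y *v x)$a)"
  have s_norm: "s = (\<Sum>a\<in>UNIV. complex_of_real ((cmod (x$a))\<^sup>2))"
    unfolding s_def assms(2) by (simp only: complex_norm_square) (simp add: mult.commute)
  have Yab: "cnj (Y$a$b) = - Y$b$a" for a b
    using arg_cong[OF assms(1)[unfolded skew_def], of "\<lambda>M. M$b$a"] by simp
  have "cnj s = (\<Sum>a\<in>UNIV. \<Sum>b\<in>UNIV. x$a * cnj (Y$a$b) * cnj (x$b))"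
    by (simp add: s_def matrix_vector_mult_def sum_distrib_left mult.assoc)
  also have "\<dots> = - (\<Sum>a\<in>UNIV. \<Sum>b\<in>UNIV. cnj (x$b) * Y$b$a * x$a)"
    by (simp add: Yab sum_negf mult_ac)
  also have "(\<Sum>a\<in>UNIV. \<Sum>b\<in>UNIV. cnj (x$b) * Y$b$a * x$a) = s"
    by (subst sum.swap) (simp add: s_def matrix_vector_mult_def sum_distrib_left mult.assoc)
  finally have "Re (cnj s) = Re (- s)" by simp
  then have "Re s = 0" by simp
  then have "(\<Sum>a\<in>UNIV. (cmod (x$a))\<^sup>2) = 0" using s_norm by (simp add: Re_sum)
  then have "\<forall>a\<in>UNIV. (cmod (x$a))\<^sup>2 = 0" by (subst (asm) sum_nonneg_eq_0_iff) auto
  then show ?thesis by (simp add: vec_eq_iff)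
qed

lemma skew_invertible:
  fixes Y :: "complex^'n^'n"
  assumes "skew Y"
  shows "invertible (mat 1 - Y)"
proof -
  have "inj ((*v) (mat 1 - Y))"
  proof (rule injI)
    fix x y assume "(mat 1 - Y) *v x = (mat 1 - Y) *v y"
    then have "(mat 1 - Y) *v (x - y) = 0" by (simp add: matrix_vector_mult_diff_distrib)
    then have "Y *v (x - y) = x - y" by (simp add: matrix_vector_mult_diff_rdistrib)
    then have "x - y = 0" by (rule skew_fixed_vector[OF assms])
    then show "x = y" by simp
  qed
  then show ?thesis
    using matrix_left_invertible_injective invertible_left_inverse by blast
qed

definition cay :: "complex^'n^'n \<Rightarrow> complex^'n^'n" where
  "cay Y = matrix_inv (mat 1 - Y) ** (mat 1 + Y)"

lemma cay_zero[simp]: "cay 0 = mat 1"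
  by (simp add: cay_def)

lemma cay_unitary:
  fixes Y :: "complex^'n^'n"
  assumes Y: "skew Y"
  shows "cay Y ** adj (cay Y) = mat 1"
proof -
  define A where "A = mat 1 - Y"
  define B where "B = mat 1 + Y"
  have iA: "invertible A" using skew_invertible[OF Y] by (simp add: A_def)
  have iB: "invertible B" using skew_invertible[OF skew_minus[OF Y]] by (simp add: B_def)
  have adjA: "adj A = B" using Y by (simp add: A_def B_def adj_diff skew_def)
  have adjB: "adj B = A" using Y by (simp add: A_def B_def adj_add skew_def)
  have comm: "A ** B = B ** A"
    by (simp add: A_def B_def matmul_diff_left matrix_add_ldistrib mm.add_left matmul_diff_right)
  have AA: "matrix_inv A ** A = mat 1" using matrix_inv_both[OF iA] by auto
  have BB: "matrix_inv B ** B = mat 1" using matrix_inv_both[OF iB] by auto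
  have "adj (matrix_inv A) ** B = mat 1"
    using arg_cong[OF matrix_inv_both(1)[OF iA], of adj] by (simp add: adj_mult adjA)
  then have "B ** adj (matrix_inv A) = mat 1" using matrix_left_right_inverse by blast
  then have adjiA: "adj (matrix_inv A) = matrix_inv B" by (simp add: matrix_inv_unique)
  have inv_comm: "matrix_inv B ** matrix_inv A = matrix_inv A ** matrix_inv B"
    using matrix_inv_mult[OF iA iB] matrix_inv_mult[OF iB iA] comm by simp
  have P: "cay Y = matrix_inv A ** B" by (simp add: cay_def A_def B_def)
  have adjP: "adj (cay Y) = A ** matrix_inv B" by (simp add: P adj_mult adjB adjiA)
  have "adj (cay Y) ** cay Y = (A ** matrix_inv B) ** (matrix_inv A ** B)"
    unfolding adjP by (simp only: P)
  also have "\<dots> = A ** (matrix_inv B ** matrix_inv A) ** B"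
    by (simp add: matrix_mul_assoc)
  also have "\<dots> = (A ** matrix_inv A) ** (matrix_inv B ** B)"
    by (simp add: inv_comm matrix_mul_assoc)
  also have "\<dots> = mat 1" using matrix_inv_both(1)[OF iA] BB by simp
  finally show ?thesis using matrix_left_right_inverse by blast
qed

lemma has_derivative_cay0: "(cay has_derivative (\<lambda>H. 2 *\<^sub>R H)) (at (0::complex^'n^'n))"
proof -
  have d1: "((\<lambda>Y::complex^'n^'n. mat 1 - Y) has_derivative (\<lambda>H. - H)) (at 0)"
    by (auto intro!: derivative_eq_intros)
  have d2: "(matrix_inv has_derivative (\<lambda>H. - (matrix_inv (mat 1) ** H ** matrix_inv (mat 1)))) (at ((\<lambda>Y::complex^'n^'n. mat 1 - Y) 0))"
    using has_derivative_matrix_inv[of "mat 1 :: complex^'n^'n"] by (simp add: invertible_def)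
  have d3: "((\<lambda>Y::complex^'n^'n. matrix_inv (mat 1 - Y)) has_derivative (\<lambda>H. H)) (at 0)"
    using has_derivative_compose[OF d1 d2] by simp
  have d4: "((\<lambda>Y::complex^'n^'n. mat 1 + Y) has_derivative (\<lambda>H. H)) (at 0)"
    by (auto intro!: derivative_eq_intros)
  have "((\<lambda>Y. matrix_inv (mat 1 - Y) ** (mat 1 + Y)) has_derivative
        (\<lambda>H. matrix_inv (mat 1 - 0) ** H + H ** (mat 1 + (0::complex^'n^'n)))) (at 0)"
    using mm.FDERIV[OF d3 d4] by simp
  then show ?thesis unfolding cay_def[abs_def] by (simp add: scaleR_2)
qed

lemma smooth_on_cay_comp:
  fixes L :: "'x::real_normed_vector \<Rightarrow> complex^'n^'n"
  assumes "bounded_linear L" "\<And>x. skew (L x)"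
  shows "smooth_on UNIV (\<lambda>x. cay (L x))"
proof -
  have a: "smooth_on UNIV (\<lambda>x. (- L) x + mat 1)"
    by (rule smooth_on_affine) (simp add: bounded_linear_minus[OF assms(1)])
  have b: "smooth_on UNIV (\<lambda>x. matrix_inv ((- L) x + mat 1))"
    by (rule smooth_on_compose[OF open_UNIV open_invertible a _ smooth_on_matrix_inv])
       (use skew_invertible[OF assms(2)] in \<open>simp add: algebra_simps\<close>)
  have c: "smooth_on UNIV (\<lambda>x. L x + mat 1)" by (rule smooth_on_affine[OF assms(1)])
  have "smooth_on UNIV (\<lambda>x. matrix_inv ((- L) x + mat 1) ** (L x + mat 1))"
    by (rule smooth_on_matmul[OF open_UNIV b c])
  then show ?thesis by (simp add: cay_def algebra_simps)
qed

section \<open>Reconstruction systems\<close>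

definition sys_mul :: "('n::finite) system \<Rightarrow> (nat \<Rightarrow> complex^'n^'n) \<Rightarrow> 'n system" where
  "sys_mul V P i r c = (\<Sum>b\<in>UNIV. V i r b * P i $ b $ c)"

lemma wf_sys_mul: "wf_system m k V \<Longrightarrow> wf_system m k (sys_mul V P)"
  unfolding wf_system_def sys_mul_def by simp

lemma sys_mul_id: "(\<And>i. P i = mat 1) \<Longrightarrow> sys_mul V P = V"
  by (simp add: sys_mul_def fun_eq_iff mat_def if_distrib cong: if_cong)

lemma frame_block_sys_mul:
  "frame_block k (sys_mul V P) i = adj (P i) ** frame_block k V i ** P i"
proof -
  have "(\<Sum>r<k i. cnj (\<Sum>x\<in>UNIV. V i r x * P i $ x $ a) * (\<Sum>y\<in>UNIV. V i r y * P i $ y $ b))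
      = (\<Sum>y\<in>UNIV. (\<Sum>x\<in>UNIV. cnj (P i $ x $ a) * (\<Sum>r<k i. cnj (V i r x) * V i r y)) * P i $ y $ b)"
    for a b
  proof -
    have "(\<Sum>r<k i. cnj (\<Sum>x\<in>UNIV. V i r x * P i $ x $ a) * (\<Sum>y\<in>UNIV. V i r y * P i $ y $ b))
        = (\<Sum>r<k i. \<Sum>x\<in>UNIV. \<Sum>y\<in>UNIV. cnj (P i $ x $ a) * (cnj (V i r x) * V i r y) * P i $ y $ b)"
      by (simp add: cnj_sum sum_distrib_left sum_distrib_right mult_ac)
    also have "\<dots> = (\<Sum>x\<in>UNIV. \<Sum>r<k i. \<Sum>y\<in>UNIV. cnj (P i $ x $ a) * (cnj (V i r x) * V i r y) * P i $ y $ b)"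
      by (rule sum.swap)
    also have "\<dots> = (\<Sum>x\<in>UNIV. \<Sum>y\<in>UNIV. \<Sum>r<k i. cnj (P i $ x $ a) * (cnj (V i r x) * V i r y) * P i $ y $ b)"
      by (rule sum.cong[OF refl], rule sum.swap)
    also have "\<dots> = (\<Sum>y\<in>UNIV. \<Sum>x\<in>UNIV. \<Sum>r<k i. cnj (P i $ x $ a) * (cnj (V i r x) * V i r y) * P i $ y $ b)"
      by (rule sum.swap)
    also have "\<dots> = (\<Sum>y\<in>UNIV. (\<Sum>x\<in>UNIV. cnj (P i $ x $ a) * (\<Sum>r<k i. cnj (V i r x) * V i r y)) * P i $ y $ b)"
      by (simp add: sum_distrib_left sum_distrib_right)
    finally show ?thesis .
  qed
  then show ?thesis
    by (simp add: frame_block_def sys_mul_def vec_eq_iff matrix_matrix_mult_def)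
qed

lemma RS_op_sys_mul:
  "RS_op m k (sys_mul V P) = (\<Sum>i<m. adj (P i) ** frame_block k V i ** P i)"
  by (simp add: RS_op_def frame_block_sys_mul)

lemma rows_sys_mul:
  assumes "P i ** adj (P i) = mat 1"
  shows "(\<Sum>c\<in>UNIV. sys_mul V P i r c * cnj (sys_mul V P i s c)) = (\<Sum>c\<in>UNIV. V i r c * cnj (V i s c))"
proof -
  have PP: "(\<Sum>c\<in>UNIV. P i $ x $ c * cnj (P i $ y $ c)) = (if x = y then 1 else 0)" for x y
    using arg_cong[OF assms, of "\<lambda>M. M $ x $ y"] by (simp add: matrix_matrix_mult_def mat_def)
  have "(\<Sum>c\<in>UNIV. sys_mul V P i r c * cnj (sys_mul V P i s c))
      = (\<Sum>c\<in>UNIV. \<Sum>y\<in>UNIV. \<Sum>x\<in>UNIV. V i r x * cnj (V i s y) * (P i $ x $ c * cnj (P i $ y $ c)))"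
    by (simp add: sys_mul_def cnj_sum sum_distrib_left sum_distrib_right mult_ac)
  also have "\<dots> = (\<Sum>y\<in>UNIV. \<Sum>c\<in>UNIV. \<Sum>x\<in>UNIV. V i r x * cnj (V i s y) * (P i $ x $ c * cnj (P i $ y $ c)))"
    by (rule sum.swap)
  also have "\<dots> = (\<Sum>y\<in>UNIV. \<Sum>x\<in>UNIV. \<Sum>c\<in>UNIV. V i r x * cnj (V i s y) * (P i $ x $ c * cnj (P i $ y $ c)))"
    by (rule sum.cong[OF refl], rule sum.swap)
  also have "\<dots> = (\<Sum>x\<in>UNIV. \<Sum>y\<in>UNIV. \<Sum>c\<in>UNIV. V i r x * cnj (V i s y) * (P i $ x $ c * cnj (P i $ y $ c)))"
    by (rule sum.swap)
  also have "\<dots> = (\<Sum>x\<in>UNIV. \<Sum>y\<in>UNIV. V i r x * cnj (V i s y) * (if x = y then 1 else 0))"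
    by (simp add: sum_distrib_left[symmetric] PP)
  also have "\<dots> = (\<Sum>c\<in>UNIV. V i r c * cnj (V i s c))"
    by (simp add: if_distrib cong: if_cong)
  finally show ?thesis .
qed

lemma sys_mul_unitary_Pv:
  assumes V: "V \<in> Pv m k v" and P: "\<And>i. P i ** adj (P i) = mat 1"
    and inv: "invertible (RS_op m k (sys_mul V P))"
  shows "sys_mul V P \<in> Pv m k v"
proof -
  have "wf_system m k (sys_mul V P)" using V by (intro wf_sys_mul) (simp add: Pv_def)
  moreover have "\<forall>i<m. \<forall>r<k i. \<forall>s<k i. (\<Sum>c\<in>UNIV. sys_mul V P i r c * cnj (sys_mul V P i s c))
      = (if r = s then complex_of_real ((v i)\<^sup>2) else 0)"
    using V by (simp add: rows_sys_mul[OF P] Pv_def)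
  ultimately show ?thesis using inv by (simp add: Pv_def)
qed

lemma adj_frame_block: "adj (frame_block k V i) = frame_block k V i"
  by (simp add: frame_block_def vec_eq_iff cnj_sum mult.commute)

lemma RS_op_nth: "RS_op m k V $ a $ b = (\<Sum>i<m. \<Sum>r<k i. cnj (V i r a) * V i r b)"
  by (simp add: RS_op_def frame_block_def)

lemma quad_RS_op:
  "(\<Sum>a\<in>UNIV. \<Sum>b\<in>UNIV. cnj (x$a) * RS_op m k V $ a $ b * x$b)
   = (\<Sum>i<m. \<Sum>r<k i. cnj (\<Sum>a\<in>UNIV. V i r a * x$a) * (\<Sum>b\<in>UNIV. V i r b * x$b))"
proof -
  have "(\<Sum>a\<in>UNIV. \<Sum>b\<in>UNIV. cnj (x$a) * RS_op m k V $ a $ b * x$b)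
      = (\<Sum>a\<in>UNIV. \<Sum>b\<in>UNIV. \<Sum>i<m. \<Sum>r<k i. cnj (V i r a * x$a) * (V i r b * x$b))"
    by (simp add: RS_op_nth sum_distrib_left sum_distrib_right mult_ac)
  also have "\<dots> = (\<Sum>a\<in>UNIV. \<Sum>i<m. \<Sum>b\<in>UNIV. \<Sum>r<k i. cnj (V i r a * x$a) * (V i r b * x$b))"
    by (rule sum.cong[OF refl], rule sum.swap)
  also have "\<dots> = (\<Sum>a\<in>UNIV. \<Sum>i<m. \<Sum>r<k i. \<Sum>b\<in>UNIV. cnj (V i r a * x$a) * (V i r b * x$b))"
    by (rule sum.cong[OF refl], rule sum.cong[OF refl], rule sum.swap)
  also have "\<dots> = (\<Sum>i<m. \<Sum>a\<in>UNIV. \<Sum>r<k i. \<Sum>b\<in>UNIV. cnj (V i r a * x$a) * (V i r b * x$b))"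
    by (rule sum.swap)
  also have "\<dots> = (\<Sum>i<m. \<Sum>r<k i. \<Sum>a\<in>UNIV. \<Sum>b\<in>UNIV. cnj (V i r a * x$a) * (V i r b * x$b))"
    by (rule sum.cong[OF refl], rule sum.swap)
  also have "\<dots> = (\<Sum>i<m. \<Sum>r<k i. \<Sum>b\<in>UNIV. \<Sum>a\<in>UNIV. cnj (V i r a * x$a) * (V i r b * x$b))"
    by (rule sum.cong[OF refl], rule sum.cong[OF refl], rule sum.swap)
  also have "\<dots> = (\<Sum>i<m. \<Sum>r<k i. cnj (\<Sum>a\<in>UNIV. V i r a * x$a) * (\<Sum>b\<in>UNIV. V i r b * x$b))"
    by (simp add: cnj_sum sum_distrib_left sum_distrib_right)
  finally show ?thesis .
qed

lemma RS_op_mult_vec: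
  "(RS_op m k V *v x) $ a = (\<Sum>i<m. \<Sum>r<k i. cnj (V i r a) * (\<Sum>b\<in>UNIV. V i r b * x$b))"
proof -
  have "(RS_op m k V *v x) $ a = (\<Sum>b\<in>UNIV. \<Sum>i<m. \<Sum>r<k i. cnj (V i r a) * (V i r b * x$b))"
    by (simp add: matrix_vector_mult_def RS_op_nth sum_distrib_left sum_distrib_right mult_ac)
  also have "\<dots> = (\<Sum>i<m. \<Sum>b\<in>UNIV. \<Sum>r<k i. cnj (V i r a) * (V i r b * x$b))"
    by (rule sum.swap)
  also have "\<dots> = (\<Sum>i<m. \<Sum>r<k i. \<Sum>b\<in>UNIV. cnj (V i r a) * (V i r b * x$b))"
    by (rule sum.cong[OF refl], rule sum.swap)
  also have "\<dots> = (\<Sum>i<m. \<Sum>r<k i. cnj (V i r a) * (\<Sum>b\<in>UNIV. V i r b * x$b))"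
    by (simp add: sum_distrib_left)
  finally show ?thesis .
qed

text \<open>An invertible RS operator is positive definite: if \<Sum>_i |V_i x|^2 = 0 then all V_i x vanish,
  so S_V x = 0 and x = 0.\<close>

lemma posdef_RS_op:
  assumes inv: "invertible (RS_op m k V)"
  shows "posdef_mat (RS_op m k V)"
  unfolding posdef_mat_def
proof (intro conjI allI impI)
  show "hermitian_mat (RS_op m k V)"
    by (simp add: hermitian_adj RS_op_def adj_sum adj_frame_block)
  fix x :: "complex^'a" assume x: "x \<noteq> 0"
  define w where "w i r = (\<Sum>b\<in>UNIV. V i r b * x$b)" for i r
  have q: "(\<Sum>a\<in>UNIV. \<Sum>b\<in>UNIV. cnj (x$a) * RS_op m k V $ a $ b * x$b)
      = (\<Sum>i<m. \<Sum>r<k i. complex_of_real ((cmod (w i r))\<^sup>2))"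
    unfolding quad_RS_op w_def[symmetric] by (simp only: complex_norm_square) (simp add: mult.commute)
  have ge: "0 \<le> (\<Sum>i<m. \<Sum>r<k i. (cmod (w i r))\<^sup>2)" by (intro sum_nonneg) auto
  show "0 < Re (\<Sum>a\<in>UNIV. \<Sum>b\<in>UNIV. cnj (x$a) * RS_op m k V $ a $ b * x$b)"
  proof (rule ccontr)
    assume "\<not> ?thesis"
    then have "(\<Sum>i<m. \<Sum>r<k i. (cmod (w i r))\<^sup>2) = 0" using ge q by (simp add: Re_sum)
    then have "\<forall>i\<in>{..<m}. (\<Sum>r<k i. (cmod (w i r))\<^sup>2) = 0"
      by (subst (asm) sum_nonneg_eq_0_iff) (auto intro: sum_nonneg)
    then have "w i r = 0" if "i < m" "r < k i" for i r
      using that by (auto simp: sum_nonneg_eq_0_iff)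
    then have "RS_op m k V *v x = 0" by (simp add: vec_eq_iff RS_op_mult_vec w_def[symmetric])
    then have "x = 0"
      using inj_matrix_vector_mult[OF inv] by (metis matrix_vector_mult_0_right injD)
    then show False using x by simp
  qed
qed

lemma trace_frame_block: "trace (frame_block k V i) = (\<Sum>r<k i. \<Sum>c\<in>UNIV. V i r c * cnj (V i r c))"
  by (simp add: trace_def frame_block_def mult.commute sum.swap[of _ UNIV])

lemma trace_RS_op_Pv:
  assumes "V \<in> Pv m k v"
  shows "trace (RS_op m k V) = complex_of_real (\<Sum>i<m. (v i)\<^sup>2 * real (k i))"
proof -
  have "trace (frame_block k V i) = complex_of_real ((v i)\<^sup>2 * real (k i))" if "i < m" for i
  proof -
    have "trace (frame_block k V i) = (\<Sum>r<k i. complex_of_real ((v i)\<^sup>2))"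
      using assms that by (simp add: trace_frame_block Pv_def)
    then show ?thesis by (simp add: mult.commute)
  qed
  then show ?thesis by (simp add: RS_op_def trace_sum)
qed

section \<open>The linearized RS operator and irreducibility\<close>

text \<open>\<Lambda>(Y) = \<Sum>_i 2 (F_i Y_i - Y_i F_i): the derivative at Y = 0 of
  Y \<mapsto> \<Sum>_i cay(Y_i)^* F_i cay(Y_i).\<close>

definition Lam :: "nat \<Rightarrow> (nat \<Rightarrow> complex^'n^'n) \<Rightarrow> (nat \<Rightarrow> complex^'n^'n) \<Rightarrow> complex^'n^'n" where
  "Lam m F Y = (\<Sum>i<m. 2 *\<^sub>R (F i ** Y i - Y i ** F i))"

lemma Lam_add: "Lam m F (\<lambda>i. Y i + Z i) = Lam m F Y + Lam m F Z"
  by (simp add: Lam_def matrix_add_ldistrib mm.add_left sum.distrib[symmetric] scaleR_add_right algebra_simps)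

lemma Lam_scaleR: "Lam m F (\<lambda>i. c *\<^sub>R Y i) = c *\<^sub>R Lam m F Y"
  by (simp add: Lam_def scaleR_sum_right matrix_scalar_ac scalar_matrix_assoc[symmetric] algebra_simps)

lemma Lam_zero: "Lam m F (\<lambda>i. 0) = 0"
  by (simp add: Lam_def)

lemma Lam_sum: "Lam m F (\<lambda>i. \<Sum>e\<in>S. Y e i) = (\<Sum>e\<in>S. Lam m F (Y e))"
proof (induction S rule: infinite_finite_induct)
  case (insert a S)
  then show ?case using Lam_add[of m F "Y a" "\<lambda>i. \<Sum>e\<in>S. Y e i"] by simp
qed (simp_all add: Lam_zero)

lemma Lam_hermitian_traceless:
  assumes herm: "\<And>i. adj (F i) = F i" and Y: "\<And>i. skew (Y i)"
  shows "adj (Lam m F Y) = Lam m F Y" "trace (Lam m F Y) = 0"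
proof -
  have "adj (F i ** Y i - Y i ** F i) = F i ** Y i - Y i ** F i" for i
    using herm[of i] Y[of i] by (simp add: skew_def adj_diff adj_mult mm.minus_left mm.minus_right)
  then show "adj (Lam m F Y) = Lam m F Y" by (simp add: Lam_def adj_sum adj_scaleR)
  have "trace (F i ** Y i - Y i ** F i) = 0" for i
    using trace_mul_sym[of "F i" "Y i"] by (simp add: trace_sub)
  then show "trace (Lam m F Y) = 0" by (simp add: Lam_def trace_sum trace_scaleR)
qed

lemma subspace_Lam_range: "subspace {Lam m F Y | Y. \<forall>i. skew (Y i)}"
  unfolding subspace_def
proof (intro conjI ballI allI)
  show "0 \<in> {Lam m F Y |Y. \<forall>i. skew (Y i)}"
    by (rule CollectI, rule exI[of _ "\<lambda>i. 0"]) (simp add: Lam_zero skew_zero)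
  fix x y assume "x \<in> {Lam m F Y |Y. \<forall>i. skew (Y i)}" "y \<in> {Lam m F Y |Y. \<forall>i. skew (Y i)}"
  then obtain Y Z where "x = Lam m F Y" "\<forall>i. skew (Y i)" "y = Lam m F Z" "\<forall>i. skew (Z i)" by blast
  then show "x + y \<in> {Lam m F Y |Y. \<forall>i. skew (Y i)}"
    by (intro CollectI exI[of _ "\<lambda>i. Y i + Z i"]) (simp add: Lam_add skew_add)
next
  fix c :: real and x assume "x \<in> {Lam m F Y |Y. \<forall>i. skew (Y i)}"
  then obtain Y where "x = Lam m F Y" "\<forall>i. skew (Y i)" by blast
  then show "c *\<^sub>R x \<in> {Lam m F Y |Y. \<forall>i. skew (Y i)}"
    by (intro CollectI exI[of _ "\<lambda>i. c *\<^sub>R Y i"]) (simp add: Lam_scaleR skew_scaleR)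
qed

lemma inner_comm_term:
  fixes F q :: "complex^'n^'n"
  assumes "adj q = q" "adj F = F"
  shows "q \<bullet> (F ** (F ** q - q ** F) - (F ** q - q ** F) ** F) = (F ** q - q ** F) \<bullet> (F ** q - q ** F)"
proof -
  define Y where "Y = F ** q - q ** F"
  have adjY: "adj Y = - Y" using assms by (simp add: Y_def adj_diff adj_mult)
  have split: "q \<bullet> (F ** Y - Y ** F) = Re (trace (q ** (F ** Y)) - trace (q ** (Y ** F)))"
    by (simp add: inner_mat assms matmul_diff_right trace_sub)
  have cyclic: "trace (q ** (Y ** F)) = trace (F ** q ** Y)"
    using trace_mul_sym[of "q ** Y" F] by (simp add: matrix_mul_assoc)
  have "trace (q ** (F ** Y)) - trace (F ** q ** Y) = trace ((q ** F - F ** q) ** Y)"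
    by (simp add: trace_sub matmul_diff_left matrix_mul_assoc)
  also have "\<dots> = trace ((- Y) ** Y)" by (simp add: Y_def)
  finally have "q \<bullet> (F ** Y - Y ** F) = Re (trace ((- Y) ** Y))" using split cyclic by simp
  also have "\<dots> = Y \<bullet> Y" by (simp add: inner_mat adjY)
  finally show ?thesis by (simp only: Y_def)
qed

text \<open>A Hermitian matrix orthogonal to the range of \<Lambda> commutes with every F_i: pairing it
  with \<Lambda> applied to its own commutators gives \<Sum>_i 2 \<parallel>[F_i, q]\<parallel>^2 = 0.\<close>

lemma orthogonal_Lam_range_commutes:
  assumes herm: "\<And>i. adj (F i) = F i" and q: "adj q = q"
    and orth: "\<And>Y. (\<And>i. skew (Y i)) \<Longrightarrow> q \<bullet> Lam m F Y = 0"
  shows "\<forall>i<m. q ** F i = F i ** q"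
proof -
  define Yq where "Yq i = F i ** q - q ** F i" for i
  have "q \<bullet> Lam m F Yq = 0" by (rule orth) (unfold Yq_def, rule skew_commutator[OF herm q])
  moreover have "q \<bullet> Lam m F Yq = (\<Sum>i<m. 2 * (Yq i \<bullet> Yq i))"
    unfolding Lam_def inner_sum_right inner_scaleR_right
    by (intro sum.cong refl) (simp add: Yq_def inner_comm_term[OF q herm])
  ultimately have "(\<Sum>i<m. 2 * (Yq i \<bullet> Yq i)) = 0" by simp
  then have "\<forall>i\<in>{..<m}. 2 * (Yq i \<bullet> Yq i) = 0"
    by (subst (asm) sum_nonneg_eq_0_iff) auto
  then have "Yq i = 0" if "i < m" for i using that by simp
  then show ?thesis by (simp add: Yq_def)
qed

text \<open>Irreducibility (only scalars commute with all F_i) makes \<Lambda> onto the traceless Hermitian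
  matrices: the component q of T orthogonal to the range of \<Lambda> is scalar with trace 0.\<close>

lemma Lam_surj:
  fixes F :: "nat \<Rightarrow> complex^'n^'n"
  assumes herm: "\<And>i. adj (F i) = F i"
    and irr: "\<And>A. (\<forall>i<m. A ** F i = F i ** A) \<Longrightarrow> A \<in> range mat"
    and T: "adj T = T" "trace T = 0"
  shows "\<exists>Y. (\<forall>i. skew (Y i)) \<and> Lam m F Y = T"
proof -
  define R where "R = {Lam m F Y | Y. \<forall>i. skew (Y i)}"
  have spanR: "span R = R" using subspace_Lam_range by (simp add: R_def span_eq_iff)
  obtain p q where p: "p \<in> span R" and q: "\<And>w. w \<in> span R \<Longrightarrow> orthogonal q w" and Tpq: "T = p + q"
    using orthogonal_subspace_decomp_exists[of R T] by metis
  have "p \<in> R" using p spanR by simp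
  then obtain Yp where Yp: "p = Lam m F Yp" "\<forall>i. skew (Yp i)" unfolding R_def by blast
  have qTp: "q = T - p" using Tpq by simp
  have "adj p = p" "trace p = 0" using Lam_hermitian_traceless[OF herm, of Yp m] Yp by auto
  then have adjq: "adj q = q" and trq: "trace q = 0" using T by (simp_all add: qTp adj_diff trace_sub)
  have "q \<bullet> Lam m F Y = 0" if "\<And>i. skew (Y i)" for Y
  proof -
    have "Lam m F Y \<in> R" unfolding R_def using that by blast
    then have "Lam m F Y \<in> span R" by (rule span_base)
    then have "orthogonal q (Lam m F Y)" by (rule q)
    then show ?thesis by (simp add: orthogonal_def)
  qed
  then have "\<forall>i<m. q ** F i = F i ** q" by (rule orthogonal_Lam_range_commutes[OF herm adjq])
  then obtain c where qc: "q = mat c" using irr by blast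
  then have "c = 0" using trq by (simp add: trace_mat)
  then have "T = Lam m F Yp" using Tpq Yp(1) qc by simp
  then show ?thesis using Yp(2) by blast
qed

section \<open>The map f and its local inverse\<close>

definition projH :: "complex^'n^'n \<Rightarrow> complex^'n^'n" where
  "projH Z = (1/2) *\<^sub>R (Z + adj Z) - (Re (trace Z) / real CARD('n)) *\<^sub>R mat 1"

lemma bounded_linear_projH: "bounded_linear (projH :: complex^'n^'n \<Rightarrow> _)"
proof -
  have tr: "Re (trace (x + y)) = Re (trace x) + Re (trace y)" "Re (trace (r *\<^sub>R x)) = r * Re (trace x)"
    for x y :: "complex^'n^'n" and r
    by (simp_all add: trace_add trace_scaleR)
  have "linear (projH :: complex^'n^'n \<Rightarrow> _)"
    by (rule linearI) (simp_all add: projH_def adj_add adj_scaleR tr algebra_simps add_divide_distrib scaleR_add_left)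
  then show ?thesis using linear_conv_bounded_linear by blast
qed

lemma adj_projH: "adj (projH Z) = projH Z"
  by (simp add: projH_def adj_diff adj_scaleR adj_add add.commute)

lemma trace_projH: "trace (projH (Z::complex^'n^'n)) = 0"
proof -
  have "trace ((1/2) *\<^sub>R (Z + adj Z)) = complex_of_real (Re (trace Z))"
    unfolding trace_scaleR trace_add trace_adj complex_add_cnj by (simp add: scaleR_conv_of_real)
  moreover have "trace ((Re (trace Z) / real CARD('n)) *\<^sub>R mat 1 :: complex^'n^'n) = complex_of_real (Re (trace Z))"
    unfolding trace_scaleR trace_I by (simp add: scaleR_conv_of_real)
  ultimately show ?thesis by (simp add: projH_def trace_sub)
qed

lemma projH_id: "adj Z = Z \<Longrightarrow> trace Z = 0 \<Longrightarrow> projH Z = Z"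
  by (simp add: projH_def scaleR_2[symmetric] scaleR_add_left[symmetric])

lemma projH_complement: "projH (Z - projH Z) = 0"
  using linear_diff[OF bounded_linear.linear[OF bounded_linear_projH], of Z "projH Z"]
  by (simp add: projH_id[OF adj_projH trace_projH])

text \<open>Real coordinates on complex matrices, needed to apply the inverse function theorem
  (which is stated on real^k).\<close>

definition kap :: "complex^'n^'n \<Rightarrow> real^(('n \<times> 'n) \<times> bool)" where
  "kap Z = (\<chi> p. if snd p then Re (Z $ fst (fst p) $ snd (fst p)) else Im (Z $ fst (fst p) $ snd (fst p)))"

definition kinv :: "real^(('n \<times> 'n) \<times> bool) \<Rightarrow> complex^'n^'n" where
  "kinv x = (\<chi> a b. Complex (x $ ((a,b),True)) (x $ ((a,b),False)))"

lemma kinv_kap[simp]: "kinv (kap Z) = Z"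
  by (simp add: kinv_def kap_def vec_eq_iff complex_eq_iff)

lemma kap_kinv[simp]: "kap (kinv x) = x"
  by (auto simp: kinv_def kap_def vec_eq_iff)

lemma bounded_linear_kap: "bounded_linear kap"
proof -
  have "linear kap" by (rule linearI) (auto simp: kap_def vec_eq_iff)
  then show ?thesis using linear_conv_bounded_linear by blast
qed

lemma bounded_linear_kinv: "bounded_linear kinv"
proof -
  have "linear kinv" by (rule linearI) (auto simp: kinv_def vec_eq_iff complex_eq_iff)
  then show ?thesis using linear_conv_bounded_linear by blast
qed

lemma kinv_0[simp]: "kinv 0 = 0"
  by (simp add: kinv_def vec_eq_iff zero_complex.code)

locale irreducible_frame =
  fixes m :: nat and F :: "nat \<Rightarrow> complex^'n::finite^'n"
  assumes herm: "\<And>i. adj (F i) = F i"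
    and irr: "\<And>A. (\<forall>i<m. A ** F i = F i ** A) \<Longrightarrow> A \<in> range mat"
begin

definition Lam_preimage :: "complex^'n^'n \<Rightarrow> nat \<Rightarrow> complex^'n^'n" where
  "Lam_preimage e = (SOME Y. (\<forall>i. skew (Y i)) \<and> Lam m F Y = projH e)"

definition Lam_rinv :: "complex^'n^'n \<Rightarrow> nat \<Rightarrow> complex^'n^'n" where
  "Lam_rinv Z i = (\<Sum>e\<in>Basis. (Z \<bullet> e) *\<^sub>R Lam_preimage e i)"

lemma Lam_preimage: "(\<forall>i. skew (Lam_preimage e i)) \<and> Lam m F (Lam_preimage e) = projH e"
proof -
  have "\<exists>Y. (\<forall>i. skew (Y i)) \<and> Lam m F Y = projH e"
    by (rule Lam_surj[OF herm irr adj_projH trace_projH])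
  then show ?thesis unfolding Lam_preimage_def by (rule someI_ex)
qed

lemma bounded_linear_Lam_rinv: "bounded_linear (\<lambda>Z. Lam_rinv Z i)"
  unfolding Lam_rinv_def
  by (intro bounded_linear_sum bounded_linear_scaleR_left[THEN bounded_linear_compose] bounded_linear_inner_left)

lemma Lam_rinv_0[simp]: "Lam_rinv 0 i = 0"
  by (simp add: Lam_rinv_def)

lemma skew_Lam_rinv: "skew (Lam_rinv Z i)"
  unfolding Lam_rinv_def using Lam_preimage by (intro skew_sum skew_scaleR) auto

lemma Lam_Lam_rinv: "Lam m F (Lam_rinv Z) = projH Z"
proof -
  have lin: "linear (projH :: complex^'n^'n \<Rightarrow> _)" using bounded_linear_projH by (rule bounded_linear.linear)
  have "Lam m F (Lam_rinv Z) = (\<Sum>e\<in>Basis. Lam m F (\<lambda>i. (Z \<bullet> e) *\<^sub>R Lam_preimage e i))"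
    unfolding Lam_rinv_def[abs_def] by (rule Lam_sum)
  also have "\<dots> = (\<Sum>e\<in>Basis. (Z \<bullet> e) *\<^sub>R projH e)"
    by (simp add: Lam_scaleR Lam_preimage)
  also have "\<dots> = projH (\<Sum>e\<in>Basis. (Z \<bullet> e) *\<^sub>R e)"
    by (simp add: linear_sum[OF lin] linear_scale[OF lin])
  also have "\<dots> = projH Z" by (simp add: euclidean_representation)
  finally show ?thesis .
qed

text \<open>The unitaries U_i(Z) = cay (L(Z)_i) attached to a matrix Z, and the map
  f(Z) = \<Sum>_i U_i(Z)^* F_i U_i(Z) + (Z - projH Z): the unitaries account for the traceless
  Hermitian directions, the identity on Z - projH Z for all remaining ones.\<close>

definition unitaries :: "complex^'n^'n \<Rightarrow> nat \<Rightarrow> complex^'n^'n" where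
  "unitaries Z i = cay (Lam_rinv Z i)"

definition fmap :: "complex^'n^'n \<Rightarrow> complex^'n^'n" where
  "fmap Z = (\<Sum>i<m. adj (unitaries Z i) ** F i ** unitaries Z i) + (Z - projH Z)"

lemma unitaries_unitary: "unitaries Z i ** adj (unitaries Z i) = mat 1"
  unfolding unitaries_def by (rule cay_unitary[OF skew_Lam_rinv])

lemma unitaries_0: "unitaries 0 i = mat 1"
  by (simp add: unitaries_def)

lemma smooth_on_unitaries: "smooth_on UNIV (\<lambda>Z. unitaries Z i)"
  unfolding unitaries_def by (rule smooth_on_cay_comp[OF bounded_linear_Lam_rinv skew_Lam_rinv])

lemma fmap_0: "fmap 0 = (\<Sum>i<m. F i)"
  by (simp add: fmap_def projH_def unitaries_0 trace_0[simplified])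

lemma smooth_fmap: "smooth_on UNIV fmap"
proof -
  have t: "smooth_on UNIV (\<lambda>Z. adj (unitaries Z i) ** F i ** unitaries Z i)" for i
    by (intro smooth_on_matmul[OF open_UNIV] smooth_on_postlinear[OF bounded_linear_adj]
        smooth_on_unitaries smooth_on_const)
  have l: "smooth_on UNIV (\<lambda>Z::complex^'n^'n. Z - projH Z)"
    by (rule smooth_on_linear) (intro bounded_linear_sub bounded_linear_ident bounded_linear_projH)
  show ?thesis unfolding fmap_def[abs_def]
    by (rule smooth_on_add[OF open_UNIV smooth_on_sum[OF open_UNIV finite_lessThan t] l])
qed

text \<open>The derivative of each summand at 0 is 2 [F_i, L(H)_i], so the derivative of f at 0 is
  \<Lambda>(L H) + (H - projH H) = H.\<close>

lemma has_derivative_conj_unitaries: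
  "((\<lambda>Z. adj (unitaries Z i) ** F i ** unitaries Z i) has_derivative
      (\<lambda>H. 2 *\<^sub>R (F i ** Lam_rinv H i - Lam_rinv H i ** F i))) (at 0)"
proof -
  have "((\<lambda>Z. Lam_rinv Z i) has_derivative (\<lambda>H. Lam_rinv H i)) (at 0)"
    by (rule bounded_linear_imp_has_derivative[OF bounded_linear_Lam_rinv])
  from has_derivative_compose[OF this, of cay] has_derivative_cay0
  have dc: "((\<lambda>Z. unitaries Z i) has_derivative (\<lambda>H. 2 *\<^sub>R Lam_rinv H i)) (at 0)"
    by (simp add: unitaries_def[abs_def])
  have "((\<lambda>Z. adj (unitaries Z i)) has_derivative (\<lambda>H. adj (2 *\<^sub>R Lam_rinv H i))) (at 0)"
    using bounded_linear.has_derivative[OF bounded_linear_adj dc] .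
  moreover have "adj (2 *\<^sub>R Lam_rinv H i) = - (2 *\<^sub>R Lam_rinv H i)" for H
    using skew_Lam_rinv by (simp add: adj_scaleR skew_def)
  ultimately have dac: "((\<lambda>Z. adj (unitaries Z i)) has_derivative (\<lambda>H. - (2 *\<^sub>R Lam_rinv H i))) (at 0)"
    by simp
  have d1: "((\<lambda>Z. adj (unitaries Z i) ** F i) has_derivative (\<lambda>H. - (2 *\<^sub>R Lam_rinv H i) ** F i)) (at 0)"
    using mm.FDERIV[OF dac has_derivative_const[of "F i"]] by simp
  have "((\<lambda>Z. adj (unitaries Z i) ** F i ** unitaries Z i) has_derivative
    (\<lambda>H. adj (unitaries 0 i) ** F i ** (2 *\<^sub>R Lam_rinv H i) + (- (2 *\<^sub>R Lam_rinv H i) ** F i) ** unitaries 0 i)) (at 0)"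
    using mm.FDERIV[OF d1 dc] by simp
  then show ?thesis
    by (simp add: unitaries_0 matrix_scalar_ac scalar_matrix_assoc mm.minus_left algebra_simps)
qed

lemma has_derivative_fmap0: "(fmap has_derivative (\<lambda>H. H)) (at 0)"
proof -
  have "(fmap has_derivative
      (\<lambda>H. (\<Sum>i<m. 2 *\<^sub>R (F i ** Lam_rinv H i - Lam_rinv H i ** F i)) + (H - projH H))) (at 0)"
    unfolding fmap_def[abs_def]
    by (intro has_derivative_add has_derivative_sum has_derivative_conj_unitaries has_derivative_diff
        has_derivative_ident bounded_linear_imp_has_derivative[OF bounded_linear_projH])
  moreover have "(\<Sum>i<m. 2 *\<^sub>R (F i ** Lam_rinv H i - Lam_rinv H i ** F i)) = projH H" for H
    using Lam_Lam_rinv by (simp add: Lam_def)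
  ultimately show ?thesis by simp
qed

lemma fmap_local_inverse:
  obtains W z where "open W" "fmap 0 \<in> W" "smooth_on W z"
    "\<And>S. S \<in> W \<Longrightarrow> fmap (z S) = S" "z (fmap 0) = 0"
proof -
  define ft where "ft x = kap (fmap (kinv x))" for x
  have fts: "smooth_on UNIV ft"
    unfolding ft_def
    by (rule smooth_on_postlinear[OF bounded_linear_kap])
       (rule smooth_on_prelinear[OF smooth_fmap bounded_linear_kinv UNIV_I])
  have "((\<lambda>x. fmap (kinv x)) has_derivative (\<lambda>h. kinv h)) (at 0)"
    using has_derivative_compose[OF bounded_linear_imp_has_derivative[OF bounded_linear_kinv],
        of fmap "\<lambda>H. H" 0] has_derivative_fmap0 by simp
  from bounded_linear.has_derivative[OF bounded_linear_kap this]
  have ftd: "(ft has_derivative (\<lambda>h. h)) (at 0)" by (simp add: ft_def[abs_def])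
  obtain U' V0 g where U': "0 \<in> U'" and V0: "open V0" "ft 0 \<in> V0"
    and gf: "\<And>x. x \<in> U' \<Longrightarrow> g (ft x) = x"
    and fg: "\<And>y. y \<in> V0 \<Longrightarrow> ft (g y) = y" and gs: "smooth_on V0 g"
    using smooth_local_inverse[OF open_UNIV fts UNIV_I ftd] by metis
  have ft0: "ft 0 = kap (fmap 0)" by (simp add: ft_def)
  show ?thesis
  proof (rule that[of "kap -` V0" "\<lambda>S. kinv (g (kap S))"])
    show "open (kap -` V0)"
      by (rule continuous_open_vimage[OF V0(1)]) (simp add: linear_continuous_at[OF bounded_linear_kap])
    show "fmap 0 \<in> kap -` V0" using V0(2) ft0 by simp
    show "smooth_on (kap -` V0) (\<lambda>S. kinv (g (kap S)))"
      by (rule smooth_on_postlinear[OF bounded_linear_kinv])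
         (rule smooth_on_prelinear[OF gs bounded_linear_kap], simp)
    show "fmap (kinv (g (kap S))) = S" if "S \<in> kap -` V0" for S
    proof -
      have "ft (g (kap S)) = kap S" using that fg by simp
      then have "kinv (kap (fmap (kinv (g (kap S))))) = kinv (kap S)" by (simp add: ft_def)
      then show ?thesis by simp
    qed
    show "kinv (g (kap (fmap 0))) = 0" using gf[OF U'] ft0 by simp
  qed
qed

text \<open>On Hermitian matrices of the right trace, f(Z) = S forces the unitary part alone to produce S:
  the difference S - \<Sum>_i U_i^* F_i U_i is traceless Hermitian and lies in the kernel of projH.\<close>

lemma fmap_hermitian_eq:
  assumes "fmap Z = S" "hermitian_mat S" "trace S = trace (\<Sum>i<m. F i)"
  shows "(\<Sum>i<m. adj (unitaries Z i) ** F i ** unitaries Z i) = S"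
proof -
  define X where "X = (\<Sum>i<m. adj (unitaries Z i) ** F i ** unitaries Z i)"
  have adjX: "adj X = X" by (simp add: X_def adj_sum adj_mult herm matrix_mul_assoc)
  have trX: "trace X = trace (\<Sum>i<m. F i)"
    by (simp add: X_def trace_sum trace_unitary_conj[OF unitaries_unitary])
  have "projH (S - X) = S - X"
    using adjX assms(2,3) trX by (intro projH_id) (simp_all add: hermitian_adj adj_diff trace_sub)
  moreover have "S - X = Z - projH Z" using assms(1) by (simp add: X_def fmap_def algebra_simps)
  ultimately have "S - X = 0" by (simp add: projH_complement)
  then show ?thesis by (simp add: X_def)
qed

end

section \<open>Local cross sections of the RS-operator map\<close>

locale irreducible_system =
  fixes m :: nat and k :: "nat \<Rightarrow> nat" and v :: "nat \<Rightarrow> real" and V :: "'n::finite system"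
  assumes V_Pv: "V \<in> Pv m k v"
    and V_irr: "irreducible_sys m k V"

sublocale irreducible_system \<subseteq> irreducible_frame m "frame_block k V"
proof
  show "adj (frame_block k V i) = frame_block k V i" for i by (rule adj_frame_block)
  show "A \<in> range mat" if "\<forall>i<m. A ** frame_block k V i = frame_block k V i ** A" for A
    using V_irr that unfolding irreducible_sys_def by blast
qed

context irreducible_system
begin

definition perturb :: "complex^'n^'n \<Rightarrow> 'n system" where
  "perturb Z = sys_mul V (unitaries Z)"

lemma perturb_0: "perturb 0 = V"
  by (simp add: perturb_def unitaries_0 sys_mul_id)

lemma fmap_0_RS_op: "fmap 0 = RS_op m k V"
  by (simp add: fmap_0 RS_op_def)

lemma perturb_section:
  assumes "fmap Z = S" "hermitian_mat S" "trace S = trace (RS_op m k V)" "invertible S"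
  shows "RS_op m k (perturb Z) = S" "perturb Z \<in> Pv m k v"
proof -
  show RS: "RS_op m k (perturb Z) = S"
    using fmap_hermitian_eq[OF assms(1,2)] assms(3)
    unfolding perturb_def RS_op_sys_mul by (simp add: RS_op_def)
  show "perturb Z \<in> Pv m k v"
    unfolding perturb_def by (rule sys_mul_unitary_Pv[OF V_Pv unitaries_unitary])
      (use RS assms(4) in \<open>simp add: perturb_def\<close>)
qed

lemma smooth_on_perturb:
  assumes "open W" "smooth_on W z"
  shows "smooth_on W (\<lambda>S. perturb (z S) i r c)"
proof -
  have "smooth_on W (\<lambda>S. unitaries (z S) i)"
    by (rule smooth_on_compose[OF assms(1) open_UNIV assms(2) UNIV_I smooth_on_unitaries])
  then have "smooth_on W (\<lambda>S. \<Sum>b\<in>UNIV. V i r b * unitaries (z S) i $ b $ c)"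
    by (intro smooth_on_sum[OF assms(1)] finite
        smooth_on_postlinear[OF bounded_linear_mult_right] smooth_on_vec_nth)
  then show ?thesis by (simp add: perturb_def sys_mul_def)
qed

end

lemma openin_Gl_pos:
  assumes "open W" "W \<inter> herm_trace \<tau> \<subseteq> Gl_pos \<tau>"
  shows "openin (top_of_set (Gl_pos \<tau>)) (W \<inter> herm_trace \<tau>)"
proof -
  have "Gl_pos \<tau> \<subseteq> herm_trace \<tau>" by (auto simp: Gl_pos_def herm_trace_def posdef_mat_def)
  then have "W \<inter> herm_trace \<tau> = Gl_pos \<tau> \<inter> W" using assms(2) by blast
  then show ?thesis unfolding openin_open using assms(1) by blast
qed

text \<open>Theorem 4.8: with W the domain of the local inverse z of f (cut down to invertible matrices),
  A = W \<inter> herm_trace \<tau> and \<rho>(S) = V \<cdot> U(z S) is a smooth section of the RS-operator map through V.\<close>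

theorem theorem4p8:
  fixes m :: nat and k :: "nat \<Rightarrow> nat" and v :: "nat \<Rightarrow> real"
    and V :: "'n::finite system" and \<tau> :: real
  assumes "m \<ge> 1"
    and "\<forall>i<m. 1 \<le> k i \<and> k i \<le> CARD('n)"
    and "\<forall>i<m. v i > 0"
    and "\<tau> = (\<Sum>i<m. (v i)\<^sup>2 * real (k i))"
    and "V \<in> Pv m k v"
    and "irreducible_sys m k V"
  shows "\<exists>(A :: (complex^'n^'n) set) (\<rho> :: complex^'n^'n \<Rightarrow> 'n system) W.
           openin (top_of_set (Gl_pos \<tau>)) A \<and> A \<subseteq> Gl_pos \<tau> \<and> RS_op m k V \<in> A
         \<and> open W \<and> W \<inter> herm_trace \<tau> = A
         \<and> (\<forall>i r c. smooth_on W (\<lambda>S. \<rho> S i r c))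
         \<and> (\<forall>S\<in>A. \<rho> S \<in> Pv m k v \<and> RS_op m k (\<rho> S) = S)
         \<and> \<rho> (RS_op m k V) = V"
proof -
  interpret irreducible_system m k v V using assms(5,6) by unfold_locales
  obtain W z where W: "open W" "RS_op m k V \<in> W" and zs: "smooth_on W z"
    and fz: "\<And>S. S \<in> W \<Longrightarrow> fmap (z S) = S" and z0: "z (RS_op m k V) = 0"
    using fmap_local_inverse unfolding fmap_0_RS_op by metis
  define W' where "W' = W \<inter> {S. invertible S}"
  have W': "open W'" unfolding W'_def by (intro open_Int W(1) open_invertible)
  have trV: "trace (RS_op m k V) = complex_of_real \<tau>" using trace_RS_op_Pv[OF assms(5)] assms(4) by simp
  have sec: "perturb (z S) \<in> Pv m k v \<and> RS_op m k (perturb (z S)) = S" if "S \<in> W' \<inter> herm_trace \<tau>" for S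
    using perturb_section[OF fz] that trV by (auto simp: W'_def herm_trace_def)
  have AG: "W' \<inter> herm_trace \<tau> \<subseteq> Gl_pos \<tau>"
    using sec posdef_RS_op by (force simp: Pv_def Gl_pos_def herm_trace_def)
  have VA: "RS_op m k V \<in> W' \<inter> herm_trace \<tau>"
    using W(2) assms(5) posdef_RS_op trV by (auto simp: W'_def herm_trace_def Pv_def posdef_mat_def)
  show ?thesis
    using openin_Gl_pos[OF W' AG] AG VA W' smooth_on_perturb[OF W' smooth_on_subset[OF zs]] sec
      z0 perturb_0 by (intro exI[of _ "W' \<inter> herm_trace \<tau>"] exI[of _ "\<lambda>S. perturb (z S)"] exI[of _ W'])
      (auto simp: W'_def)
qed

end
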